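(* Let $A\in\{0,1\}^{n\times n}$ be symmetric, let $t\in(0,1)$, $c_{A}=\sqrt{(1-t)/t}$, $c_{A^c}=\sqrt{t/(1-t)}$, $\lambda=\frac{1}{48\sqrt n}$, and let $Y^*$ be a cluster matrix as described in the context. Then $Y^*$ is the unique optimal solution of $$\max_{Y\in\mathbb{R}^{n\times n}}\ c_{A}\sum_{(i,j):a_{ij}=1}y_{ij}-c_{A^c}\sum_{(i,j):a_{ij}=0}y_{ij}-48\sqrt{n}\,\|Y\|_*\quad\text{s.t. } 0\le y_{ij}\le 1\ \ \forall i,j,$$ if there exist a matrix $W\in\mathbb{R}^{n\times n}$ and a number $0<\epsilon<1$ such that (a) $\|W\|\le 1$; (b) $\|P_T(W)\|_\infty\le \frac{\epsilon}{2}\lambda\min\{c_{A^c},c_{A}\}$; (c) $-(1+\epsilon)\lambda c_{A^c}-(U_0U_0^\top+W)_{ij}=0$ for all $(i,j)\in R\cap\mathcal{A}^c$; $-(1+\epsilon)\lambda c_{A}+w_{ij}=0$ for all $(i,j)\in R^c\cap\mathcal{A}$; $(1-\epsilon)\lambda c_{A}-(U_0U_0^\top+W)_{ij}\ge 0$ for all $(i,j)\in R\cap\mathcal{A}$; and $(1-\epsilon)\lambda c_{A^c}+w_{ij}\ge0$ for all $(i,j)\in R^c\cap\mathcal{A}^c$.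
   Context: Cluster matrix: the nodes $\{1,\dots,n\}$ contain a subset $V_1$ partitioned into disjoint clusters (remaining nodes are outliers), and $Y^*\in\{0,1\}^{n\times n}$ has $y^*_{ij}=1$ iff $i,j\in V_1$ lie in the same cluster (including $i=j\in V_1$), $0$ otherwise. $Y^*$ is symmetric positive semidefinite; write its compact eigen/singular value decomposition $Y^*=U_0\Sigma_0U_0^\top$ with $U_0$ having orthonormal columns. $P_T(M):=U_0U_0^\top M+MU_0U_0^\top-U_0U_0^\top MU_0U_0^\top$. $\mathcal{A}=\mathrm{support}(A)=\{(i,j):a_{ij}=1\}$, $R=\mathrm{support}(Y^* )$, and complements are taken in $\{1,\dots,n\}^2$. $\|W\|$ is the spectral norm, $\|M\|_\infty=\max_{ij}|m_{ij}|$, $\|\cdot\|_*$ the nuclear norm. *)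

theory Defs
  imports "Jordan_Normal_Form.Matrix" "HOL-Library.Disjoint_Sets"
begin

(* Matrices are Jordan_Normal_Form matrices ('real mat'); indices are 0-based,
   i.e. node set {0..<n}. *)

definition vnorm2 :: "real vec \<Rightarrow> real" where
  "vnorm2 v = sqrt (v \<bullet> v)"

definition spec_norm :: "real mat \<Rightarrow> real" where
  "spec_norm M = Sup {vnorm2 (M *\<^sub>v v) | v. v \<in> carrier_vec (dim_col M) \<and> vnorm2 v \<le> 1}"

definition psd_mat :: "real mat \<Rightarrow> bool" where
  "psd_mat S \<longleftrightarrow> S \<in> carrier_mat (dim_row S) (dim_row S) \<and> S\<^sup>T = S \<and>
     (\<forall>v \<in> carrier_vec (dim_row S). v \<bullet> (S *\<^sub>v v) \<ge> 0)"

definition mtrace :: "real mat \<Rightarrow> real" where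
  "mtrace S = (\<Sum>k<dim_row S. S $$ (k,k))"

(* nuclear (trace) norm: ||M||_* = trace (sqrt (M^T M)) = sum of singular values *)
definition nuclear_norm :: "real mat \<Rightarrow> real" where
  "nuclear_norm M = mtrace (THE S. S \<in> carrier_mat (dim_col M) (dim_col M) \<and> psd_mat S
                                 \<and> S * S = M\<^sup>T * M)"

definition max_abs_entry :: "real mat \<Rightarrow> real" where
  "max_abs_entry M = Max (insert 0 {\<bar>M $$ (i,j)\<bar> | i j. i < dim_row M \<and> j < dim_col M})"

definition P_T :: "real mat \<Rightarrow> real mat \<Rightarrow> real mat" where
  "P_T U0 M = (let P = U0 * U0\<^sup>T in P * M + M * P - P * M * P)"

definition is_cluster_matrix :: "nat \<Rightarrow> nat set \<Rightarrow> nat set set \<Rightarrow> real mat \<Rightarrow> bool" where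
  "is_cluster_matrix n V1 Cl Y \<longleftrightarrow> V1 \<subseteq> {0..<n} \<and> partition_on V1 Cl \<and>
     Y \<in> carrier_mat n n \<and>
     (\<forall>i<n. \<forall>j<n. Y $$ (i,j) = (if \<exists>C\<in>Cl. i \<in> C \<and> j \<in> C then 1 else 0))"

definition compact_decomp :: "real mat \<Rightarrow> nat \<Rightarrow> real mat \<Rightarrow> real mat \<Rightarrow> bool" where
  "compact_decomp Y r U0 S0 \<longleftrightarrow> U0 \<in> carrier_mat (dim_row Y) r \<and> S0 \<in> carrier_mat r r \<and>
     U0\<^sup>T * U0 = 1\<^sub>m r \<and> diagonal_mat S0 \<and> (\<forall>k<r. S0 $$ (k,k) > 0) \<and>
     Y = U0 * S0 * U0\<^sup>T"

definition feasible :: "nat \<Rightarrow> real mat \<Rightarrow> bool" where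
  "feasible n Y \<longleftrightarrow> Y \<in> carrier_mat n n \<and> (\<forall>i<n. \<forall>j<n. 0 \<le> Y $$ (i,j) \<and> Y $$ (i,j) \<le> 1)"

definition objective :: "nat \<Rightarrow> real mat \<Rightarrow> real \<Rightarrow> real \<Rightarrow> real mat \<Rightarrow> real" where
  "objective n A cA cAc Y =
     cA * (\<Sum>(i,j)\<in>{(i,j). i<n \<and> j<n \<and> A $$ (i,j) = 1}. Y $$ (i,j))
     - cAc * (\<Sum>(i,j)\<in>{(i,j). i<n \<and> j<n \<and> A $$ (i,j) = 0}. Y $$ (i,j))
     - 48 * sqrt (real n) * nuclear_norm Y"

end

theory Submission
  imports Defs "Jordan_Normal_Form.Spectral_Radius"
begin

(* Let P = U0 U0^T, the orthogonal projection onto the range of Y*. The matrix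
   Z = P + W - P_T(W) = P + (I - P) W (I - P) is a contraction since ||W|| <= 1, so by trace duality
   <Z, Y> <= ||Y||_* for every Y, with equality <Z, Y*> = <P, Y*> = tr Y* = ||Y*||_* at Y*, because
   Y* is positive semidefinite and P Y* = Y* P = Y*. Hence the objective gap at a feasible Y is at
   most 48 sqrt n * sum_ij (lambda c_ij - z_ij) (y_ij - y*_ij), where c_ij is c_A or -c_{A^c}.
   Feasibility forces y_ij <= y*_ij on the support of Y* and y_ij >= y*_ij = 0 off it, where moreover
   p_ij = 0; conditions (b) and (c) give lambda c_ij - z_ij the opposite sign with margin
   epsilon lambda min(c_A, c_{A^c}) / 2, so the gap is negative unless Y = Y*. *)

lemma index_mult_mat_sum:
  fixes A B :: "real mat"
  assumes "A \<in> carrier_mat n k" "B \<in> carrier_mat k m" "i < n" "j < m"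
  shows "(A * B) $$ (i,j) = (\<Sum>l<k. A $$ (i,l) * B $$ (l,j))"
  using assms by (auto simp: scalar_prod_def lessThan_atLeast0 intro!: sum.cong)

lemma index_mult_mat_vec_sum:
  fixes A :: "real mat"
  assumes "A \<in> carrier_mat n k" "v \<in> carrier_vec k" "i < n"
  shows "(A *\<^sub>v v) $ i = (\<Sum>l<k. A $$ (i,l) * v $ l)"
  using assms by (auto simp: scalar_prod_def lessThan_atLeast0 intro!: sum.cong)

lemma scalar_prod_sum:
  fixes v w :: "real vec"
  assumes "v \<in> carrier_vec n" "w \<in> carrier_vec n"
  shows "v \<bullet> w = (\<Sum>l<n. v $ l * w $ l)"
  using assms by (auto simp: scalar_prod_def lessThan_atLeast0)

lemma scalar_prod_self_nonneg: "0 \<le> (v :: real vec) \<bullet> v"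
  using conjugate_square_ge_0_vec[of v] by simp

lemma scalar_prod_self_eq_0_iff:
  "(v :: real vec) \<in> carrier_vec n \<Longrightarrow> v \<bullet> v = 0 \<longleftrightarrow> v = 0\<^sub>v n"
  using conjugate_square_eq_0_vec[of v n] by simp

lemmas assoc_mult_square_mat = assoc_mult_mat[of _ N N _ N _ N] mult_carrier_mat[of _ N N _ N] for N

lemma transpose_mult3:
  fixes A B C :: "real mat"
  assumes "A \<in> carrier_mat n k" "B \<in> carrier_mat k l" "C \<in> carrier_mat l m"
  shows "(A * B * C)\<^sup>T = C\<^sup>T * B\<^sup>T * A\<^sup>T"
proof -
  have "(A * B * C)\<^sup>T = C\<^sup>T * (A * B)\<^sup>T"
    by (rule transpose_mult[of _ n l]) (use assms in auto)
  also have "(A * B)\<^sup>T = B\<^sup>T * A\<^sup>T" by (rule transpose_mult) (use assms in auto)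
  finally show ?thesis using assms by (simp add: assoc_mult_mat[of _ m l _ k _ n])
qed

lemma transpose_mat_diag[simp]: "(mat_diag n d)\<^sup>T = mat_diag n d"
  unfolding mat_diag_def by (intro eq_matI) auto

lemma mult_mat_diag_entry:
  fixes X :: "real mat"
  assumes "X \<in> carrier_mat k n" "j < k" "i < n"
  shows "(X * mat_diag n d) $$ (j,i) = X $$ (j,i) * d i"
  using assms by (simp add: mat_diag_mult_right[of X k n])

lemma col_mult_mat_diag:
  fixes X :: "real mat"
  assumes "X \<in> carrier_mat k n" "i < n"
  shows "col (X * mat_diag n d) i = d i \<cdot>\<^sub>v col X i"
  using assms by (intro eq_vecI) (auto simp: mat_diag_mult_right[of X k n] mult.commute)

lemma mat_diag_mult_vec:
  fixes w :: "real vec"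
  assumes "w \<in> carrier_vec n"
  shows "mat_diag n d *\<^sub>v w = vec n (\<lambda>i. d i * w $ i)"
proof (rule eq_vecI)
  fix i assume "i < dim_vec (vec n (\<lambda>i. d i * w $ i))"
  hence i: "i < n" by simp
  have "(mat_diag n d *\<^sub>v w) $ i = (\<Sum>l<n. (if i = l then d l else 0) * w $ l)"
    using assms i by (subst index_mult_mat_vec_sum[of _ n n]) (auto simp: mat_diag_def)
  also have "\<dots> = d i * w $ i" using i by (simp add: if_distrib[of "\<lambda>x. x * _"] cong: if_cong)
  finally show "(mat_diag n d *\<^sub>v w) $ i = vec n (\<lambda>i. d i * w $ i) $ i" using i by simp
qed (use assms in \<open>auto simp: mat_diag_def\<close>)

lemma scalar_prod_mat_diag:
  fixes w :: "real vec"
  assumes "w \<in> carrier_vec n"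
  shows "w \<bullet> (mat_diag n d *\<^sub>v w) = (\<Sum>l<n. d l * (w $ l * w $ l))"
  using assms by (simp add: mat_diag_mult_vec scalar_prod_sum[of _ n] mult.left_commute)

lemma mult_block_diag_mat:
  fixes A1 A2 B1 B2 :: "real mat"
  assumes "A1 \<in> carrier_mat n1 n1" "B1 \<in> carrier_mat n1 n1"
    and "A2 \<in> carrier_mat n2 n2" "B2 \<in> carrier_mat n2 n2"
  shows "four_block_mat A1 (0\<^sub>m n1 n2) (0\<^sub>m n2 n1) A2 * four_block_mat B1 (0\<^sub>m n1 n2) (0\<^sub>m n2 n1) B2
       = four_block_mat (A1 * B1) (0\<^sub>m n1 n2) (0\<^sub>m n2 n1) (A2 * B2)"
  using assms by (subst mult_four_block_mat[of _ n1 n1 _ n2 _ n2 _ _ n1 _ n2]) auto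

lemma transpose_block_diag_mat:
  fixes A1 A2 :: "real mat"
  assumes "A1 \<in> carrier_mat n1 n1" "A2 \<in> carrier_mat n2 n2"
  shows "(four_block_mat A1 (0\<^sub>m n1 n2) (0\<^sub>m n2 n1) A2)\<^sup>T = four_block_mat A1\<^sup>T (0\<^sub>m n1 n2) (0\<^sub>m n2 n1) A2\<^sup>T"
  using assms by (simp add: transpose_four_block_mat[of A1 n1 n1 _ n2 _ n2 A2])

section \<open>The spectral theorem for real symmetric matrices\<close>

definition householder_mat :: "nat \<Rightarrow> real \<Rightarrow> real vec \<Rightarrow> real mat" where
  "householder_mat n c w = mat n n (\<lambda>(i,j). (if i = j then 1 else 0) - c * w $ i * w $ j)"

lemma householder_mat_symmetric: "(householder_mat n c w)\<^sup>T = householder_mat n c w"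
  unfolding householder_mat_def by (rule eq_matI) auto

lemma householder_mat_involution:
  assumes cw: "c * (\<Sum>l<n. w $ l * w $ l) = 2"
  shows "householder_mat n c w * householder_mat n c w = 1\<^sub>m n"
proof (rule eq_matI)
  let ?H = "householder_mat n c w"
  have Hc: "?H \<in> carrier_mat n n" unfolding householder_mat_def by simp
  fix i j assume "i < dim_row (1\<^sub>m n)" "j < dim_col (1\<^sub>m n)"
  hence ij: "i < n" "j < n" by auto
  have "(?H * ?H) $$ (i,j) = (\<Sum>l<n. ((if i = l then 1 else 0) - c * w$i * w$l) * ((if l = j then 1 else 0) - c * w$l * w$j))"
    using ij by (subst index_mult_mat_sum[OF Hc Hc]) (auto simp: householder_mat_def)
  also have "\<dots> = (\<Sum>l<n. (if i = l then (if l = j then 1 else 0) - c * w$l * w$j else 0)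
       - (if l = j then c * w$i * w$l else 0) + (c * c * w$i * w$j) * (w$l * w$l))"
    by (intro sum.cong refl, auto simp: algebra_simps)
  also have "\<dots> = (if i = j then 1 else 0) - 2 * c * w$i * w$j + c * w$i * w$j * (c * (\<Sum>l<n. w$l * w$l))"
    using ij by (simp add: sum.distrib sum_subtractf sum_distrib_left[symmetric])
  also have "\<dots> = 1\<^sub>m n $$ (i,j)" using ij cw by simp
  finally show "(?H * ?H) $$ (i,j) = 1\<^sub>m n $$ (i,j)" .
qed (auto simp: householder_mat_def)

lemma householder_reflection_exists:
  fixes v :: "real vec"
  assumes v: "v \<in> carrier_vec n" and vv: "v \<bullet> v = 1" and n: "0 < n"
  shows "\<exists>H. H \<in> carrier_mat n n \<and> H\<^sup>T = H \<and> H * H = 1\<^sub>m n \<and> H *\<^sub>v unit_vec n 0 = v"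
proof (cases "v = unit_vec n 0")
  case True
  thus ?thesis by (intro exI[of _ "1\<^sub>m n"]) auto
next
  case False
  define w where "w = v - unit_vec n 0"
  have wi: "w $ i = v $ i - (if i = 0 then 1 else 0)" if "i < n" for i
    unfolding w_def using v that by (auto simp: unit_vec_def)
  have ww: "(\<Sum>i<n. w$i * w$i) = 2 - 2 * v$0"
  proof -
    have "(\<Sum>i<n. w$i * w$i) = (\<Sum>i<n. v$i * v$i - (if i = 0 then 2 * v$i else 0) + (if i = 0 then 1 else 0))"
      by (intro sum.cong refl, simp add: wi algebra_simps)
    also have "\<dots> = 1 - 2 * v$0 + 1"
      using n vv scalar_prod_sum[OF v v] by (simp add: sum.distrib sum_subtractf)
    finally show ?thesis by simp
  qed
  have "w \<noteq> 0\<^sub>v n"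
  proof
    assume "w = 0\<^sub>v n"
    hence "v = unit_vec n 0" using v wi by (intro eq_vecI) (auto simp: unit_vec_def)
    thus False using False by simp
  qed
  moreover have "w \<in> carrier_vec n" unfolding w_def using v by simp
  ultimately obtain k where k: "k < n" "w $ k \<noteq> 0" by (metis eq_vecI carrier_vecD index_zero_vec)
  have "0 < w$k * w$k" using k(2) not_real_square_gt_zero by blast
  also have "\<dots> \<le> (\<Sum>i<n. w$i * w$i)" using k by (intro member_le_sum) auto
  finally have wpos: "0 < 2 - 2 * v$0" using ww by simp
  \<comment> \<open>\<open>c = 2 / (w \<bullet> w)\<close> makes \<open>I - c w w\<^sup>T\<close> the reflection in the hyperplane orthogonal to \<open>w\<close>\<close>
  define c where "c = 2 / (2 - 2 * v$0)"
  have cw: "c * (\<Sum>i<n. w$i * w$i) = 2" unfolding c_def ww using wpos by (simp add: field_simps)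
  have cw0: "c * w$0 = -1" unfolding c_def using wi[OF n] wpos by (simp add: field_simps)
  have "householder_mat n c w *\<^sub>v unit_vec n 0 = v"
  proof (rule eq_vecI)
    fix i assume "i < dim_vec v" hence i: "i < n" using v by simp
    have "(householder_mat n c w *\<^sub>v unit_vec n 0) $ i = (if i = 0 then 1 else 0) - w$i * (c * w$0)"
      using i n by (simp add: householder_mat_def)
    also have "\<dots> = v $ i" using cw0 wi[OF i] by simp
    finally show "(householder_mat n c w *\<^sub>v unit_vec n 0) $ i = v $ i" .
  qed (use v in \<open>auto simp: householder_mat_def\<close>)
  thus ?thesis using householder_mat_symmetric householder_mat_involution[OF cw]
    by (intro exI[of _ "householder_mat n c w"]) (auto simp: householder_mat_def)
qed

lemma eigenvalue_real_of_symmetric: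
  fixes A :: "real mat"
  assumes A: "A \<in> carrier_mat n n" and sym: "A\<^sup>T = A"
    and l: "eigenvalue (map_mat complex_of_real A) l"
  shows "Im l = 0"
proof -
  let ?Ac = "map_mat complex_of_real A"
  obtain w where "eigenvector ?Ac w l" using l unfolding eigenvalue_def by auto
  hence wc: "w \<in> carrier_vec n" "w \<noteq> 0\<^sub>v n" "?Ac *\<^sub>v w = l \<cdot>\<^sub>v w"
    using A unfolding eigenvector_def by auto
  have comp: "(\<Sum>j<n. complex_of_real (A$$(i,j)) * w$j) = l * w$i" if i: "i<n" for i
  proof -
    have "(?Ac *\<^sub>v w) $ i = (\<Sum>j<n. complex_of_real (A$$(i,j)) * w$j)"
      using i A wc(1) by (auto simp: scalar_prod_def lessThan_atLeast0 intro!: sum.cong)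
    thus ?thesis using wc(3) i wc(1) by simp
  qed
  \<comment> \<open>the Rayleigh quotient \<open>s = w\<^sup>* A w\<close> is self-conjugate, and \<open>s = l * (w\<^sup>* w)\<close>\<close>
  define s where "s = (\<Sum>i<n. cnj (w$i) * (\<Sum>j<n. complex_of_real (A$$(i,j)) * w$j))"
  define r where "r = (\<Sum>i<n. (cmod (w$i))\<^sup>2)"
  have s_eq: "s = l * complex_of_real r"
  proof -
    have "s = l * (\<Sum>i<n. cnj (w$i) * w$i)" unfolding s_def using comp
      by (simp add: sum_distrib_left mult.commute mult.left_commute)
    also have "(\<Sum>i<n. cnj (w$i) * w$i) = complex_of_real r" unfolding r_def of_real_sum
      by (rule sum.cong[OF refl], subst complex_norm_square, simp add: mult.commute)
    finally show ?thesis .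
  qed
  have symA: "A$$(i,j) = A$$(j,i)" if "i<n" "j<n" for i j
    using sym that A by (metis carrier_matD index_transpose_mat(1))
  have "cnj s = (\<Sum>i<n. \<Sum>j<n. w$i * complex_of_real (A$$(i,j)) * cnj (w$j))"
    unfolding s_def by (simp add: sum_distrib_left mult.assoc)
  also have "\<dots> = (\<Sum>j<n. \<Sum>i<n. w$i * complex_of_real (A$$(i,j)) * cnj (w$j))"
    by (rule sum.swap)
  also have "\<dots> = s" unfolding s_def sum_distrib_left
    by (intro sum.cong refl, simp add: symA mult.commute mult.left_commute)
  finally have "Im s = 0" by (metis Reals_cnj_iff complex_is_Real_iff)
  obtain i where i: "i < n" "w $ i \<noteq> 0" using wc by (metis eq_vecI carrier_vecD index_zero_vec)
  have "0 < (cmod (w$i))\<^sup>2" using i by simp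
  also have "\<dots> \<le> r" unfolding r_def using i by (intro member_le_sum) auto
  finally have "0 < r" .
  thus ?thesis using \<open>Im s = 0\<close> s_eq by simp
qed

lemma symmetric_unit_eigenvector_exists:
  fixes A :: "real mat"
  assumes A: "A \<in> carrier_mat n n" and sym: "A\<^sup>T = A" and n: "0 < n"
  shows "\<exists>e v. v \<in> carrier_vec n \<and> v \<bullet> v = 1 \<and> A *\<^sub>v v = e \<cdot>\<^sub>v v"
proof -
  let ?Ac = "map_mat complex_of_real A"
  have Ac: "?Ac \<in> carrier_mat n n" using A by auto
  obtain l where l: "eigenvalue ?Ac l"
    using spectrum_non_empty[OF Ac n] unfolding spectrum_def by auto
  hence "l = complex_of_real (Re l)"
    using eigenvalue_real_of_symmetric[OF A sym] by (simp add: complex_eq_iff)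
  moreover have "poly (char_poly ?Ac) l = 0" using l eigenvalue_root_char_poly[OF Ac] by simp
  ultimately have "poly (map_poly of_real (char_poly A)) (complex_of_real (Re l)) = 0"
    using of_real_hom.char_poly_hom[OF A] by metis
  hence "poly (char_poly A) (Re l) = 0" by (simp only: of_real_hom.poly_map_poly of_real_eq_0_iff)
  then obtain u where "eigenvector A u (Re l)"
    using eigenvalue_root_char_poly[OF A] unfolding eigenvalue_def by auto
  hence u: "u \<in> carrier_vec n" "u \<noteq> 0\<^sub>v n" "A *\<^sub>v u = Re l \<cdot>\<^sub>v u"
    using A unfolding eigenvector_def by auto
  have uu: "u \<bullet> u > 0" using u scalar_prod_self_nonneg[of u] scalar_prod_self_eq_0_iff[OF u(1)] by auto
  define v where "v = (1 / sqrt (u \<bullet> u)) \<cdot>\<^sub>v u"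
  have "v \<bullet> v = (1 / sqrt (u \<bullet> u)) * (1 / sqrt (u \<bullet> u)) * (u \<bullet> u)"
    unfolding v_def using u by (simp add: smult_scalar_prod_distrib scalar_prod_smult_right)
  also have "\<dots> = 1" using uu by (simp add: field_simps)
  finally have "v \<bullet> v = 1" .
  moreover have "A *\<^sub>v v = Re l \<cdot>\<^sub>v v" unfolding v_def using u A
    by (simp add: mult_mat_vec smult_smult_assoc mult.commute)
  moreover have "v \<in> carrier_vec n" unfolding v_def using u by simp
  ultimately show ?thesis by blast
qed

lemma symmetric_deflation:
  fixes A :: "real mat"
  assumes A: "A \<in> carrier_mat (Suc m) (Suc m)" and sym: "A\<^sup>T = A"
  shows "\<exists>H e A3. H \<in> carrier_mat (Suc m) (Suc m) \<and> H\<^sup>T = H \<and> H * H = 1\<^sub>m (Suc m)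
           \<and> A3 \<in> carrier_mat m m \<and> A3\<^sup>T = A3
           \<and> H * A * H = four_block_mat (mat 1 1 (\<lambda>_. e)) (0\<^sub>m 1 m) (0\<^sub>m m 1) A3"
proof -
  let ?e0 = "unit_vec (Suc m) 0"
  obtain e v where v: "v \<in> carrier_vec (Suc m)" "v \<bullet> v = 1" "A *\<^sub>v v = e \<cdot>\<^sub>v v"
    using symmetric_unit_eigenvector_exists[OF A sym] by auto
  obtain H where H: "H \<in> carrier_mat (Suc m) (Suc m)" "H\<^sup>T = H" "H * H = 1\<^sub>m (Suc m)" "H *\<^sub>v ?e0 = v"
    using householder_reflection_exists[OF v(1) v(2)] by auto
  define A' where "A' = H * A * H"
  have A'c: "A' \<in> carrier_mat (Suc m) (Suc m)" unfolding A'_def using A H by simp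
  have A'T: "A'\<^sup>T = A'" unfolding A'_def transpose_mult3[OF H(1) A H(1)] H(2) sym ..
  \<comment> \<open>\<open>H\<close> swaps the eigenvector \<open>v\<close> and \<open>e\<^sub>0\<close>, so the first row and column of \<open>A'\<close> vanish off the diagonal\<close>
  have "A' *\<^sub>v ?e0 = (H * A) *\<^sub>v (H *\<^sub>v ?e0)"
    unfolding A'_def using A H by (intro assoc_mult_mat_vec) auto
  also have "\<dots> = H *\<^sub>v (A *\<^sub>v v)" unfolding H(4) using A H v by (intro assoc_mult_mat_vec) auto
  also have "\<dots> = e \<cdot>\<^sub>v (H *\<^sub>v (H *\<^sub>v ?e0))" using v H by (simp add: mult_mat_vec)
  also have "H *\<^sub>v (H *\<^sub>v ?e0) = (H * H) *\<^sub>v ?e0" using H by (intro assoc_mult_mat_vec[symmetric]) auto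
  finally have A'e: "A' *\<^sub>v ?e0 = e \<cdot>\<^sub>v ?e0" using H by simp
  have col0: "A' $$ (i,0) = (if i = 0 then e else 0)" if "i < Suc m" for i
    using arg_cong[OF A'e, of "\<lambda>x. x $ i"] that A'c by simp
  have row0: "A' $$ (0,j) = (if j = 0 then e else 0)" if "j < Suc m" for j
    using col0[OF that] arg_cong[OF A'T, of "\<lambda>M. M $$ (0, j)"] A'c that by simp
  define A3 where "A3 = mat m m (\<lambda>(i,j). A' $$ (Suc i, Suc j))"
  have "A3\<^sup>T = A3"
  proof (rule eq_matI)
    fix i j assume "i < dim_row A3" "j < dim_col A3"
    hence ij: "i < m" "j < m" unfolding A3_def by auto
    have "A' $$ (Suc j, Suc i) = A' $$ (Suc i, Suc j)"
      using arg_cong[OF A'T, of "\<lambda>M. M $$ (Suc i, Suc j)"] A'c ij by simp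
    thus "A3\<^sup>T $$ (i,j) = A3 $$ (i,j)" unfolding A3_def using ij by simp
  qed (auto simp: A3_def)
  moreover have "A' = four_block_mat (mat 1 1 (\<lambda>_. e)) (0\<^sub>m 1 m) (0\<^sub>m m 1) A3"
    using A'c col0 row0 by (intro eq_matI) (auto simp: A3_def)
  moreover have "A3 \<in> carrier_mat m m" unfolding A3_def by simp
  ultimately show ?thesis using H unfolding A'_def by blast
qed

lemma orthogonal_block_extension:
  fixes O3 :: "real mat"
  assumes O3: "O3 \<in> carrier_mat m m" "O3\<^sup>T * O3 = 1\<^sub>m m"
  defines "B \<equiv> four_block_mat (1\<^sub>m 1) (0\<^sub>m 1 m) (0\<^sub>m m 1) O3"
  shows "B \<in> carrier_mat (Suc m) (Suc m)" "B\<^sup>T * B = 1\<^sub>m (Suc m)"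
    "four_block_mat (mat 1 1 (\<lambda>_. e)) (0\<^sub>m 1 m) (0\<^sub>m m 1) (O3 * mat_diag m d * O3\<^sup>T)
       = B * mat_diag (Suc m) (\<lambda>i. if i = 0 then e else d (i - 1)) * B\<^sup>T"
proof -
  let ?blk = "\<lambda>X Y. four_block_mat X (0\<^sub>m 1 m) (0\<^sub>m m 1) Y"
  show "B \<in> carrier_mat (Suc m) (Suc m)" unfolding B_def carrier_mat_def using O3 by auto
  have BT: "B\<^sup>T = ?blk (1\<^sub>m 1) O3\<^sup>T" unfolding B_def using O3 by (simp add: transpose_block_diag_mat)
  show "B\<^sup>T * B = 1\<^sub>m (Suc m)"
    unfolding BT unfolding B_def by (subst mult_block_diag_mat) (use O3 in auto)
  have D: "mat_diag (Suc m) (\<lambda>i. if i = 0 then e else d (i - 1)) = ?blk (mat 1 1 (\<lambda>_. e)) (mat_diag m d)"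
    by (intro eq_matI) (auto simp: mat_diag_def)
  have BD: "B * ?blk (mat 1 1 (\<lambda>_. e)) (mat_diag m d) = ?blk (mat 1 1 (\<lambda>_. e)) (O3 * mat_diag m d)"
    unfolding B_def by (subst mult_block_diag_mat) (use O3 in auto)
  have "?blk (mat 1 1 (\<lambda>_. e)) (O3 * mat_diag m d * O3\<^sup>T)
      = ?blk (mat 1 1 (\<lambda>_. e) * 1\<^sub>m 1) (O3 * mat_diag m d * O3\<^sup>T)" by simp
  also have "\<dots> = ?blk (mat 1 1 (\<lambda>_. e)) (O3 * mat_diag m d) * B\<^sup>T"
    unfolding BT by (subst mult_block_diag_mat) (use O3 in auto)
  also have "\<dots> = B * mat_diag (Suc m) (\<lambda>i. if i = 0 then e else d (i - 1)) * B\<^sup>T" unfolding D BD ..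
  finally show "?blk (mat 1 1 (\<lambda>_. e)) (O3 * mat_diag m d * O3\<^sup>T)
      = B * mat_diag (Suc m) (\<lambda>i. if i = 0 then e else d (i - 1)) * B\<^sup>T" .
qed

theorem real_symmetric_spectral:
  fixes A :: "real mat"
  assumes "A \<in> carrier_mat n n" "A\<^sup>T = A"
  shows "\<exists>Q d. Q \<in> carrier_mat n n \<and> Q\<^sup>T * Q = 1\<^sub>m n \<and> A = Q * mat_diag n d * Q\<^sup>T"
  using assms
proof (induction n arbitrary: A)
  case 0
  thus ?case by (intro exI[of _ "1\<^sub>m 0"]) (auto intro!: eq_matI)
next
  case (Suc m)
  obtain H e A3 where H: "H \<in> carrier_mat (Suc m) (Suc m)" "H\<^sup>T = H" "H * H = 1\<^sub>m (Suc m)"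
    and A3: "A3 \<in> carrier_mat m m" "A3\<^sup>T = A3"
    and HAH: "H * A * H = four_block_mat (mat 1 1 (\<lambda>_. e)) (0\<^sub>m 1 m) (0\<^sub>m m 1) A3"
    using symmetric_deflation[OF Suc.prems] by blast
  obtain O3 d3 where O3: "O3 \<in> carrier_mat m m" "O3\<^sup>T * O3 = 1\<^sub>m m" "A3 = O3 * mat_diag m d3 * O3\<^sup>T"
    using Suc.IH[OF A3] by auto
  define B where "B = four_block_mat (1\<^sub>m 1) (0\<^sub>m 1 m) (0\<^sub>m m 1) O3"
  define D where "D = mat_diag (Suc m) (\<lambda>i. if i = 0 then e else d3 (i - 1))"
  note B = orthogonal_block_extension[OF O3(1,2), folded B_def]
  have Dc: "D \<in> carrier_mat (Suc m) (Suc m)" unfolding D_def by simp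
  define Q where "Q = H * B"
  have Qc: "Q \<in> carrier_mat (Suc m) (Suc m)" unfolding Q_def using H B by simp
  have QT: "Q\<^sup>T = B\<^sup>T * H" unfolding Q_def using H B by (simp add: transpose_mult[of _ "Suc m" "Suc m"])
  have "Q\<^sup>T * Q = B\<^sup>T * (H * H) * B"
    unfolding QT unfolding Q_def using H(1) B by (simp add: assoc_mult_square_mat[where N="Suc m"])
  hence "Q\<^sup>T * Q = 1\<^sub>m (Suc m)" using H B by simp
  moreover have "A = Q * D * Q\<^sup>T"
  proof -
    have "A = (H * H) * A * (H * H)" using H Suc.prems by simp
    also have "\<dots> = H * (H * A * H) * H"
      using H(1) Suc.prems by (simp add: assoc_mult_square_mat[where N="Suc m"])
    finally show ?thesis unfolding HAH O3(3) B(3)[where e = e and d = d3, folded D_def] QT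
      unfolding Q_def using H(1) B(1) Dc
      by (simp add: assoc_mult_square_mat[where N="Suc m"])
  qed
  ultimately show ?case using Qc unfolding D_def by blast
qed

section \<open>Positive semidefinite square roots and the nuclear norm\<close>

lemma mult_left_inverse_square:
  fixes A B X :: "real mat"
  assumes "A \<in> carrier_mat n n" "B \<in> carrier_mat n n" "A * B = 1\<^sub>m n" "X \<in> carrier_mat n n"
  shows "A * (B * X) = X"
  using assms by (simp flip: assoc_mult_mat[of A n n B n X n])

lemma psd_mat_conj_diag:
  fixes Q :: "real mat"
  assumes Q: "Q \<in> carrier_mat n r" and d: "\<forall>i<r. 0 \<le> d i"
  shows "psd_mat (Q * mat_diag r d * Q\<^sup>T)"
  unfolding psd_mat_def
proof (intro conjI ballI)
  have QD: "Q * mat_diag r d \<in> carrier_mat n r" using Q mat_diag_dim by (rule mult_carrier_mat)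
  show "Q * mat_diag r d * Q\<^sup>T \<in> carrier_mat (dim_row (Q * mat_diag r d * Q\<^sup>T)) (dim_row (Q * mat_diag r d * Q\<^sup>T))"
    using mult_carrier_mat[OF QD transpose_carrier_mat[THEN iffD2, OF Q]] Q by simp
  show "(Q * mat_diag r d * Q\<^sup>T)\<^sup>T = Q * mat_diag r d * Q\<^sup>T"
    using Q by (simp add: transpose_mult3[of _ n r _ r _ n])
  fix v :: "real vec" assume "v \<in> carrier_vec (dim_row (Q * mat_diag r d * Q\<^sup>T))"
  hence v: "v \<in> carrier_vec n" using Q by simp
  define w where "w = Q\<^sup>T *\<^sub>v v"
  have w: "w \<in> carrier_vec r" unfolding w_def using Q v by simp
  have "(Q * mat_diag r d * Q\<^sup>T) *\<^sub>v v = (Q * mat_diag r d) *\<^sub>v w"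
    unfolding w_def by (rule assoc_mult_mat_vec[OF QD _ v]) (use Q in simp)
  also have "\<dots> = Q *\<^sub>v (mat_diag r d *\<^sub>v w)" by (rule assoc_mult_mat_vec[OF Q mat_diag_dim w])
  finally have "(Q * mat_diag r d * Q\<^sup>T) *\<^sub>v v = Q *\<^sub>v (mat_diag r d *\<^sub>v w)" .
  also have "v \<bullet> (Q *\<^sub>v (mat_diag r d *\<^sub>v w)) = w \<bullet> (mat_diag r d *\<^sub>v w)"
    using transpose_vec_mult_scalar[OF Q mult_mat_vec_carrier[OF mat_diag_dim w] v] unfolding w_def by simp
  also have "\<dots> = (\<Sum>l<r. d l * (w $ l * w $ l))" using w by (rule scalar_prod_mat_diag)
  also have "\<dots> \<ge> 0" using d by (intro sum_nonneg) auto
  finally show "0 \<le> v \<bullet> ((Q * mat_diag r d * Q\<^sup>T) *\<^sub>v v)" .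
qed

lemma mtrace_conj_diag:
  fixes Q :: "real mat"
  assumes Q: "Q \<in> carrier_mat n n" and QQ: "Q\<^sup>T * Q = 1\<^sub>m n"
  shows "mtrace (Q * mat_diag n d * Q\<^sup>T) = (\<Sum>k<n. d k)"
proof -
  have QD: "Q * mat_diag n d \<in> carrier_mat n n" using Q mat_diag_dim by (rule mult_carrier_mat)
  have "(Q * mat_diag n d * Q\<^sup>T) $$ (i,i) = (\<Sum>k<n. Q $$ (i,k) * d k * Q $$ (i,k))" if "i < n" for i
    using that Q by (subst index_mult_mat_sum[OF QD]) (auto simp: mult_mat_diag_entry[OF Q])
  hence "mtrace (Q * mat_diag n d * Q\<^sup>T) = (\<Sum>i<n. \<Sum>k<n. Q $$ (i,k) * d k * Q $$ (i,k))"
    unfolding mtrace_def using Q by simp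
  also have "\<dots> = (\<Sum>k<n. d k * (\<Sum>i<n. Q $$ (i,k) * Q $$ (i,k)))"
    by (subst sum.swap) (simp add: sum_distrib_left ac_simps)
  also have "\<dots> = (\<Sum>k<n. d k)"
  proof (intro sum.cong refl)
    fix k assume "k \<in> {..<n}"
    hence "(\<Sum>i<n. Q $$ (i,k) * Q $$ (i,k)) = (Q\<^sup>T * Q) $$ (k,k)"
      using Q by (subst index_mult_mat_sum[of _ n n _ n]) auto
    thus "d k * (\<Sum>i<n. Q $$ (i,k) * Q $$ (i,k)) = d k" using QQ \<open>k \<in> {..<n}\<close> by simp
  qed
  finally show ?thesis .
qed

text \<open>\<open>u = T q - d q\<close> satisfies \<open>T u = -d u\<close>, which for positive semidefinite \<open>T\<close> forces \<open>u = 0\<close>.\<close>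

lemma psd_eigenvector_of_square:
  fixes T :: "real mat"
  assumes T: "T \<in> carrier_mat n n" and Tpsd: "psd_mat T" and qc: "q \<in> carrier_vec n" and d: "0 \<le> d"
    and TTq: "T *\<^sub>v (T *\<^sub>v q) = (d * d) \<cdot>\<^sub>v q"
  shows "T *\<^sub>v q = d \<cdot>\<^sub>v q"
proof -
  define u where "u = T *\<^sub>v q - d \<cdot>\<^sub>v q"
  have uc: "u \<in> carrier_vec n" unfolding u_def using T qc by simp
  have Tu: "T *\<^sub>v u = (- d) \<cdot>\<^sub>v u"
  proof -
    have "T *\<^sub>v u = T *\<^sub>v (T *\<^sub>v q) - T *\<^sub>v (d \<cdot>\<^sub>v q)"
      unfolding u_def using T qc by (intro mult_minus_distrib_mat_vec) auto
    also have "\<dots> = (d * d) \<cdot>\<^sub>v q - d \<cdot>\<^sub>v (T *\<^sub>v q)" unfolding TTq using T qc by (simp add: mult_mat_vec)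
    also have "\<dots> = (- d) \<cdot>\<^sub>v u" unfolding u_def using T qc by (intro eq_vecI) (auto simp: algebra_simps)
    finally show ?thesis .
  qed
  have "0 \<le> u \<bullet> (T *\<^sub>v u)" using Tpsd uc T unfolding psd_mat_def by auto
  hence ineq: "0 \<le> - d * (u \<bullet> u)" unfolding Tu using uc by (simp add: scalar_prod_smult_right)
  have "u \<bullet> u = 0"
  proof (cases "d = 0")
    case False
    thus ?thesis using d ineq scalar_prod_self_nonneg[of u] by (simp add: mult_le_0_iff)
  next
    case True
    have TTr: "T\<^sup>T = T" using Tpsd T unfolding psd_mat_def by auto
    have "u = T *\<^sub>v q" unfolding u_def True using T qc by (intro eq_vecI) auto
    hence "u \<bullet> u = (T\<^sup>T *\<^sub>v u) \<bullet> q" using transpose_vec_mult_scalar[OF T qc uc] by simp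
    also have "T\<^sup>T *\<^sub>v u = 0\<^sub>v n" unfolding TTr Tu True using uc by (intro eq_vecI) auto
    finally show ?thesis using qc by simp
  qed
  hence "u = 0\<^sub>v n" using scalar_prod_self_eq_0_iff[OF uc] by simp
  show "T *\<^sub>v q = d \<cdot>\<^sub>v q"
  proof (rule eq_vecI)
    fix j assume j: "j < dim_vec (d \<cdot>\<^sub>v q)"
    hence "u $ j = 0" using \<open>u = 0\<^sub>v n\<close> qc by simp
    thus "(T *\<^sub>v q) $ j = (d \<cdot>\<^sub>v q) $ j" using T qc j unfolding u_def by simp
  qed (use T qc in auto)
qed

lemma psd_sqrt_unique:
  fixes Q T :: "real mat"
  assumes Q: "Q \<in> carrier_mat n n" and QQ: "Q\<^sup>T * Q = 1\<^sub>m n" and QQ': "Q * Q\<^sup>T = 1\<^sub>m n"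
    and d: "\<forall>i<n. 0 \<le> d i"
    and T: "T \<in> carrier_mat n n" and Tpsd: "psd_mat T"
    and TT: "T * T = (Q * mat_diag n d * Q\<^sup>T) * (Q * mat_diag n d * Q\<^sup>T)"
  shows "T = Q * mat_diag n d * Q\<^sup>T"
proof -
  define S where "S = Q * mat_diag n d * Q\<^sup>T"
  have Sc: "S \<in> carrier_mat n n" unfolding S_def using Q by (simp add: mult_carrier_mat[of _ n n])
  have SQ: "S * Q = Q * mat_diag n d"
  proof -
    have "S * Q = Q * mat_diag n d * (Q\<^sup>T * Q)" unfolding S_def using Q by (simp add: assoc_mult_square_mat[where N=n])
    thus ?thesis using QQ right_mult_one_mat[OF mult_carrier_mat[OF Q mat_diag_dim]] by simp
  qed
  have TQ: "T *\<^sub>v col Q i = S *\<^sub>v col Q i" if i: "i < n" for i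
  proof -
    define q where "q = col Q i"
    have qc: "q \<in> carrier_vec n" unfolding q_def using Q i by simp
    have Sq: "S *\<^sub>v q = d i \<cdot>\<^sub>v q"
    proof -
      have "S *\<^sub>v q = col (S * Q) i" unfolding q_def using Sc Q i by (intro col_mult2[symmetric])
      also have "\<dots> = d i \<cdot>\<^sub>v q" unfolding SQ q_def using col_mult_mat_diag[OF Q i] .
      finally show ?thesis .
    qed
    have "T *\<^sub>v (T *\<^sub>v q) = (T * T) *\<^sub>v q" using T qc by (intro assoc_mult_mat_vec[symmetric]) auto
    also have "\<dots> = S *\<^sub>v (S *\<^sub>v q)" unfolding TT S_def[symmetric] using Sc qc by (intro assoc_mult_mat_vec) auto
    also have "\<dots> = (d i * d i) \<cdot>\<^sub>v q" unfolding Sq using Sc qc by (simp add: mult_mat_vec Sq smult_smult_assoc)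
    finally have "T *\<^sub>v (T *\<^sub>v q) = (d i * d i) \<cdot>\<^sub>v q" .
    with d i have "T *\<^sub>v q = d i \<cdot>\<^sub>v q" by (intro psd_eigenvector_of_square[OF T Tpsd qc]) auto
    thus ?thesis using Sq unfolding q_def by simp
  qed
  have TQSQ: "T * Q = S * Q"
  proof (rule eq_matI)
    fix j i assume "j < dim_row (S * Q)" "i < dim_col (S * Q)"
    hence ji: "j < n" "i < n" using Sc Q by auto
    have "(T * Q) $$ (j,i) = (T *\<^sub>v col Q i) $ j" using ji T Q by simp
    also have "\<dots> = (S * Q) $$ (j,i)" unfolding TQ[OF ji(2)] using ji Sc Q by simp
    finally show "(T * Q) $$ (j,i) = (S * Q) $$ (j,i)" .
  qed (use T Sc Q in auto)
  have "T = (T * Q) * Q\<^sup>T" using QQ' T Q by simp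
  also have "\<dots> = S" unfolding TQSQ using QQ' Sc Q by simp
  finally show ?thesis unfolding S_def .
qed

lemma gram_mat_diagonalization:
  fixes Y :: "real mat"
  assumes Y: "Y \<in> carrier_mat n n"
  shows "\<exists>Q d. Q \<in> carrier_mat n n \<and> Q\<^sup>T * Q = 1\<^sub>m n \<and> Q * Q\<^sup>T = 1\<^sub>m n \<and> (\<forall>i<n. 0 \<le> d i)
           \<and> (Y * Q)\<^sup>T * (Y * Q) = mat_diag n (\<lambda>i. d i * d i)"
proof -
  have "(Y\<^sup>T * Y)\<^sup>T = Y\<^sup>T * Y" using Y by (simp add: transpose_mult[of _ n n _ n])
  then obtain Q e where Q: "Q \<in> carrier_mat n n" "Q\<^sup>T * Q = 1\<^sub>m n" and YY: "Y\<^sup>T * Y = Q * mat_diag n e * Q\<^sup>T"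
    using real_symmetric_spectral[of "Y\<^sup>T * Y" n] Y by auto
  have QQ': "Q * Q\<^sup>T = 1\<^sub>m n" using mat_mult_left_right_inverse[of "Q\<^sup>T" n Q] Q by simp
  have "(Y * Q)\<^sup>T * (Y * Q) = Q\<^sup>T * (Y\<^sup>T * Y) * Q"
    using Y Q by (simp add: transpose_mult[of _ n n _ n] assoc_mult_square_mat[where N=n])
  also have "\<dots> = (Q\<^sup>T * Q) * mat_diag n e * (Q\<^sup>T * Q)"
    unfolding YY using Q(1) by (simp add: assoc_mult_square_mat[where N=n])
  also have "\<dots> = mat_diag n e"
    by (simp only: Q(2) left_mult_one_mat[OF mat_diag_dim] right_mult_one_mat[OF mat_diag_dim])
  finally have YQ: "(Y * Q)\<^sup>T * (Y * Q) = mat_diag n e" .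
  have e: "0 \<le> e i" if "i < n" for i
  proof -
    have "e i = ((Y * Q)\<^sup>T * (Y * Q)) $$ (i,i)" unfolding YQ using that by (simp add: mat_diag_def)
    also have "\<dots> = (\<Sum>l<n. (Y * Q) $$ (l,i) * (Y * Q) $$ (l,i))"
      using that Y Q by (subst index_mult_mat_sum[of _ n n _ n]) auto
    also have "\<dots> \<ge> 0" by (intro sum_nonneg) auto
    finally show ?thesis .
  qed
  have "(Y * Q)\<^sup>T * (Y * Q) = mat_diag n (\<lambda>i. sqrt (e i) * sqrt (e i))"
    unfolding YQ mat_diag_def by (intro eq_matI) (use e in auto)
  moreover have "\<forall>i<n. 0 \<le> sqrt (e i)" using e by simp
  ultimately show ?thesis using Q QQ' by (intro exI[of _ Q] exI[of _ "\<lambda>i. sqrt (e i)"]) simp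
qed

lemma conj_diag_sqrt_gram:
  fixes Y Q :: "real mat"
  assumes Y: "Y \<in> carrier_mat n n" and Q: "Q \<in> carrier_mat n n" "Q\<^sup>T * Q = 1\<^sub>m n" "Q * Q\<^sup>T = 1\<^sub>m n"
    and YQ: "(Y * Q)\<^sup>T * (Y * Q) = mat_diag n (\<lambda>i. d i * d i)"
  shows "(Q * mat_diag n d * Q\<^sup>T) * (Q * mat_diag n d * Q\<^sup>T) = Y\<^sup>T * Y"
proof -
  have "(Q * mat_diag n d * Q\<^sup>T) * (Q * mat_diag n d * Q\<^sup>T) = Q * (mat_diag n d * mat_diag n d) * Q\<^sup>T"
    using Q by (simp add: assoc_mult_square_mat[where N=n] mult_left_inverse_square[of "Q\<^sup>T" n Q] del: mat_diag_diag)
  also have "\<dots> = Q * ((Y * Q)\<^sup>T * (Y * Q)) * Q\<^sup>T" unfolding YQ by simp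
  also have "\<dots> = Y\<^sup>T * Y" using Y Q
    by (simp add: transpose_mult[of _ n n _ n] assoc_mult_square_mat[where N=n] mult_left_inverse_square[of Q n "Q\<^sup>T"])
  finally show ?thesis .
qed

lemma nuclear_norm_eq_mtrace:
  fixes Y T :: "real mat"
  assumes Y: "Y \<in> carrier_mat n n" and T: "T \<in> carrier_mat n n" "psd_mat T" "T * T = Y\<^sup>T * Y"
  shows "nuclear_norm Y = mtrace T"
proof -
  obtain Q d where Q: "Q \<in> carrier_mat n n" "Q\<^sup>T * Q = 1\<^sub>m n" "Q * Q\<^sup>T = 1\<^sub>m n" "\<forall>i<n. 0 \<le> d i"
    and YQ: "(Y * Q)\<^sup>T * (Y * Q) = mat_diag n (\<lambda>i. d i * d i)"
    using gram_mat_diagonalization[OF Y] by blast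
  define S where "S = Q * mat_diag n d * Q\<^sup>T"
  have Sc: "S \<in> carrier_mat n n" unfolding S_def using Q by (simp add: mult_carrier_mat[of _ n n])
  have SS: "S * S = Y\<^sup>T * Y" unfolding S_def using Y Q(1-3) YQ by (rule conj_diag_sqrt_gram)
  have unique: "T' = S" if "T' \<in> carrier_mat n n" "psd_mat T'" "T' * T' = Y\<^sup>T * Y" for T'
    using psd_sqrt_unique[OF Q that(1,2)] that(3) unfolding SS[symmetric] S_def by simp
  have "(THE S'. S' \<in> carrier_mat (dim_col Y) (dim_col Y) \<and> psd_mat S' \<and> S' * S' = Y\<^sup>T * Y) = S"
  proof (rule the_equality)
    have "psd_mat S" unfolding S_def using Q(1,4) by (rule psd_mat_conj_diag)
    thus "S \<in> carrier_mat (dim_col Y) (dim_col Y) \<and> psd_mat S \<and> S * S = Y\<^sup>T * Y"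
      using Y Sc SS by simp
  qed (use Y unique in simp)
  thus ?thesis unfolding nuclear_norm_def using unique[OF T] by simp
qed

lemma nuclear_norm_eq_sum_singular_values:
  fixes Y Q :: "real mat"
  assumes Y: "Y \<in> carrier_mat n n" and Q: "Q \<in> carrier_mat n n" "Q\<^sup>T * Q = 1\<^sub>m n" "Q * Q\<^sup>T = 1\<^sub>m n"
    and d: "\<forall>i<n. 0 \<le> d i" and YQ: "(Y * Q)\<^sup>T * (Y * Q) = mat_diag n (\<lambda>i. d i * d i)"
  shows "nuclear_norm Y = (\<Sum>i<n. d i)"
proof -
  have "nuclear_norm Y = mtrace (Q * mat_diag n d * Q\<^sup>T)"
  proof (rule nuclear_norm_eq_mtrace[OF Y])
    show "Q * mat_diag n d * Q\<^sup>T \<in> carrier_mat n n" using Q by (simp add: mult_carrier_mat[of _ n n])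
    show "psd_mat (Q * mat_diag n d * Q\<^sup>T)" using Q(1) d by (rule psd_mat_conj_diag)
  qed (rule conj_diag_sqrt_gram[OF Y Q YQ])
  thus ?thesis using mtrace_conj_diag[OF Q(1,2)] by simp
qed

lemma nuclear_norm_psd:
  assumes "psd_mat Y"
  shows "nuclear_norm Y = mtrace Y"
proof -
  have Y: "Y \<in> carrier_mat (dim_row Y) (dim_row Y)" and YT: "Y\<^sup>T = Y"
    using assms unfolding psd_mat_def by auto
  have "Y * Y = Y\<^sup>T * Y" unfolding YT ..
  thus ?thesis by (rule nuclear_norm_eq_mtrace[OF Y Y assms])
qed

section \<open>Trace duality\<close>

definition contraction_mat :: "nat \<Rightarrow> real mat \<Rightarrow> bool" where
  "contraction_mat n Z \<longleftrightarrow> Z \<in> carrier_mat n n \<and> (\<forall>x\<in>carrier_vec n. (Z *\<^sub>v x) \<bullet> (Z *\<^sub>v x) \<le> x \<bullet> x)"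

definition frob_inner :: "nat \<Rightarrow> real mat \<Rightarrow> real mat \<Rightarrow> real" where
  "frob_inner n X Y = (\<Sum>i<n. \<Sum>j<n. X $$ (i,j) * Y $$ (i,j))"

lemma frob_inner_mult_left:
  fixes A B C :: "real mat"
  assumes A: "A \<in> carrier_mat n n" and B: "B \<in> carrier_mat n n" and C: "C \<in> carrier_mat n n"
  shows "frob_inner n (A * B) C = frob_inner n B (A\<^sup>T * C)"
proof -
  have "frob_inner n (A * B) C = (\<Sum>i<n. \<Sum>j<n. \<Sum>k<n. A $$ (i,k) * B $$ (k,j) * C $$ (i,j))"
    unfolding frob_inner_def using A B
    by (intro sum.cong refl) (simp add: index_mult_mat_sum[OF A B] sum_distrib_right del: index_mult_mat)
  also have "\<dots> = (\<Sum>k<n. \<Sum>j<n. \<Sum>i<n. A $$ (i,k) * B $$ (k,j) * C $$ (i,j))"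
    by (subst sum.swap, subst (2) sum.swap, subst sum.swap) (rule refl)
  also have "\<dots> = frob_inner n B (A\<^sup>T * C)"
    unfolding frob_inner_def using A C
    by (intro sum.cong refl) (simp add: index_mult_mat_sum[of _ n n _ n] sum_distrib_left ac_simps del: index_mult_mat)
  finally show ?thesis .
qed

lemma frob_inner_mult_right:
  fixes A B C :: "real mat"
  assumes A: "A \<in> carrier_mat n n" and B: "B \<in> carrier_mat n n" and C: "C \<in> carrier_mat n n"
  shows "frob_inner n (A * B) C = frob_inner n A (C * B\<^sup>T)"
proof -
  have "frob_inner n (A * B) C = (\<Sum>i<n. \<Sum>j<n. \<Sum>k<n. A $$ (i,k) * B $$ (k,j) * C $$ (i,j))"
    unfolding frob_inner_def using A B
    by (intro sum.cong refl) (simp add: index_mult_mat_sum[OF A B] sum_distrib_right del: index_mult_mat)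
  also have "\<dots> = (\<Sum>i<n. \<Sum>k<n. \<Sum>j<n. A $$ (i,k) * B $$ (k,j) * C $$ (i,j))"
    by (rule sum.cong[OF refl], rule sum.swap)
  also have "\<dots> = frob_inner n A (C * B\<^sup>T)"
    unfolding frob_inner_def using B C
    by (intro sum.cong refl) (simp add: index_mult_mat_sum[of _ n n _ n] sum_distrib_left ac_simps del: index_mult_mat)
  finally show ?thesis .
qed

lemma frob_inner_add:
  assumes "A \<in> carrier_mat n n" "B \<in> carrier_mat n n"
  shows "frob_inner n (A + B) C = frob_inner n A C + frob_inner n B C"
  unfolding frob_inner_def using assms by (simp add: distrib_right sum.distrib)

lemma frob_inner_diff:
  assumes "A \<in> carrier_mat n n" "B \<in> carrier_mat n n"
  shows "frob_inner n (A - B) C = frob_inner n A C - frob_inner n B C"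
  unfolding frob_inner_def using assms by (simp add: left_diff_distrib sum_subtractf)

lemma frob_inner_compression_eq:
  fixes P W X :: "real mat"
  assumes P: "P \<in> carrier_mat n n" and PT: "P\<^sup>T = P" and W: "W \<in> carrier_mat n n"
    and X: "X \<in> carrier_mat n n" and PX: "P * X = X" and XP: "X * P = X"
  shows "frob_inner n (P * W + W * P - P * W * P) X = frob_inner n W X"
proof -
  have PW: "frob_inner n (P * W) X = frob_inner n W X"
    unfolding frob_inner_mult_left[OF P W X] PT PX ..
  have WP: "frob_inner n (W * P) X = frob_inner n W X"
    unfolding frob_inner_mult_right[OF W P X] PT XP ..
  have "frob_inner n (P * W * P) X = frob_inner n W X"
    using frob_inner_mult_right[OF mult_carrier_mat[OF P W] P X] unfolding PT XP PW .
  thus ?thesis using P W by (simp add: frob_inner_diff[of _ n] frob_inner_add[of _ n] PW WP)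
qed

lemma frob_inner_eq_mtrace:
  fixes P X :: "real mat"
  assumes P: "P \<in> carrier_mat n n" and X: "X \<in> carrier_mat n n" and XT: "X\<^sup>T = X" and PX: "P * X = X"
  shows "frob_inner n P X = mtrace X"
proof -
  have "X $$ (i,j) = X $$ (j,i)" if "i < n" "j < n" for i j
    using arg_cong[OF XT, of "\<lambda>M. M $$ (j,i)"] X that by simp
  hence "frob_inner n P X = (\<Sum>i<n. \<Sum>j<n. P $$ (i,j) * X $$ (j,i))"
    unfolding frob_inner_def by (intro sum.cong refl) auto
  also have "\<dots> = (\<Sum>i<n. (P * X) $$ (i,i))"
    using P X by (intro sum.cong refl) (simp add: index_mult_mat_sum[OF P X] del: index_mult_mat)
  finally show ?thesis unfolding PX mtrace_def using X by simp
qed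

lemma sum_mult_le_of_sum_squares:
  fixes a b :: "nat \<Rightarrow> real"
  assumes aa: "(\<Sum>i<n. a i * a i) = D * D" and D: "0 \<le> D" and bb: "(\<Sum>i<n. b i * b i) \<le> 1"
  shows "(\<Sum>i<n. a i * b i) \<le> D"
proof (cases "D = 0")
  case True
  hence "\<forall>i\<in>{..<n}. a i * a i = 0" using aa by (subst sum_nonneg_eq_0_iff[symmetric]) auto
  thus ?thesis using True by simp
next
  case False
  hence D0: "0 < D" using D by simp
  have "a i * b i \<le> (a i * a i) / (2 * D) + (D / 2) * (b i * b i)" for i
  proof -
    have "0 \<le> (a i - D * b i) * (a i - D * b i)" by simp
    hence "2 * D * (a i * b i) \<le> a i * a i + D * D * (b i * b i)" by (simp add: algebra_simps)
    thus ?thesis using D0 by (simp add: field_simps)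
  qed
  hence "(\<Sum>i<n. a i * b i) \<le> (\<Sum>i<n. (a i * a i) / (2 * D) + (D / 2) * (b i * b i))"
    by (intro sum_mono) auto
  also have "\<dots> = (D * D) / (2 * D) + (D / 2) * (\<Sum>i<n. b i * b i)"
    by (simp add: sum.distrib sum_divide_distrib[symmetric] sum_distrib_left[symmetric] aa)
  also have "\<dots> \<le> (D * D) / (2 * D) + (D / 2) * 1" using bb D0 by (intro add_left_mono mult_left_mono) auto
  also have "\<dots> = D" using D0 by (simp add: field_simps)
  finally show ?thesis .
qed

lemma frob_inner_mult_orthogonal:
  fixes Q Y Z :: "real mat"
  assumes Q: "Q \<in> carrier_mat n n" "Q * Q\<^sup>T = 1\<^sub>m n" and Y: "Y \<in> carrier_mat n n" and Z: "Z \<in> carrier_mat n n"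
  shows "frob_inner n (Z * Q) (Y * Q) = frob_inner n Z Y"
  using frob_inner_mult_right[OF Z Q(1) mult_carrier_mat[OF Y Q(1)]] Q Y by simp

text \<open>Rotating by the \<open>Q\<close> of \<open>gram_mat_diagonalization\<close> gives \<open>\<langle>Z, Y\<rangle> = \<langle>Z Q, Y Q\<rangle>\<close>; the columns
  of \<open>Y Q\<close> are orthogonal of lengths \<open>d\<^sub>k\<close>, with \<open>\<parallel>Y\<parallel>\<^sub>* = \<Sum> d\<^sub>k\<close>, and those of \<open>Z Q\<close> have length at most
  \<open>1\<close>, so Cauchy-Schwarz applies column by column.\<close>

lemma frob_inner_le_nuclear_norm:
  fixes Y Z :: "real mat"
  assumes Y: "Y \<in> carrier_mat n n" and Z: "contraction_mat n Z"
  shows "frob_inner n Z Y \<le> nuclear_norm Y"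
proof -
  obtain Q d where Q: "Q \<in> carrier_mat n n" "Q\<^sup>T * Q = 1\<^sub>m n" "Q * Q\<^sup>T = 1\<^sub>m n" "\<forall>i<n. 0 \<le> d i"
    and YQ_gram: "(Y * Q)\<^sup>T * (Y * Q) = mat_diag n (\<lambda>i. d i * d i)"
    using gram_mat_diagonalization[OF Y] by blast
  have Zc: "Z \<in> carrier_mat n n" and contr: "\<forall>x\<in>carrier_vec n. (Z *\<^sub>v x) \<bullet> (Z *\<^sub>v x) \<le> x \<bullet> x"
    using Z unfolding contraction_mat_def by auto
  define YQ where "YQ = Y * Q"
  define ZQ where "ZQ = Z * Q"
  have YQc: "YQ \<in> carrier_mat n n" "ZQ \<in> carrier_mat n n" unfolding YQ_def ZQ_def using Y Zc Q by auto
  have "frob_inner n Z Y = frob_inner n ZQ YQ"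
    unfolding YQ_def ZQ_def by (rule frob_inner_mult_orthogonal[symmetric, OF Q(1,3) Y Zc])
  also have "\<dots> = (\<Sum>k<n. \<Sum>i<n. YQ $$ (i,k) * ZQ $$ (i,k))"
    unfolding frob_inner_def by (subst sum.swap) (simp add: mult.commute)
  also have "\<dots> \<le> (\<Sum>k<n. d k)"
  proof (rule sum_mono)
    fix k assume "k \<in> {..<n}" hence k: "k < n" by simp
    show "(\<Sum>i<n. YQ $$ (i,k) * ZQ $$ (i,k)) \<le> d k"
    proof (rule sum_mult_le_of_sum_squares)
      show "0 \<le> d k" using Q(4) k by simp
      have "(\<Sum>i<n. YQ $$ (i,k) * YQ $$ (i,k)) = (YQ\<^sup>T * YQ) $$ (k,k)"
        using k YQc by (subst index_mult_mat_sum[of _ n n _ n]) auto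
      thus "(\<Sum>i<n. YQ $$ (i,k) * YQ $$ (i,k)) = d k * d k"
        using YQ_gram k unfolding YQ_def by (simp add: mat_diag_def)
      define q where "q = col Q k"
      have qc: "q \<in> carrier_vec n" unfolding q_def using Q k by simp
      have "(\<Sum>i<n. ZQ $$ (i,k) * ZQ $$ (i,k)) = (Z *\<^sub>v q) \<bullet> (Z *\<^sub>v q)"
        unfolding q_def ZQ_def using Zc Q k by (subst scalar_prod_sum[of _ n]) auto
      also have "\<dots> \<le> q \<bullet> q" using contr qc by simp
      also have "\<dots> = (Q\<^sup>T * Q) $$ (k,k)" unfolding q_def using Q(1) k by simp
      also have "\<dots> = 1" using Q(2) k by simp
      finally show "(\<Sum>i<n. ZQ $$ (i,k) * ZQ $$ (i,k)) \<le> 1" .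
    qed
  qed
  also have "\<dots> = nuclear_norm Y" using nuclear_norm_eq_sum_singular_values[OF Y Q YQ_gram] by simp
  finally show ?thesis .
qed

lemma abs_mult_mat_vec_le:
  fixes M :: "real mat"
  assumes v: "v \<in> carrier_vec (dim_col M)" "\<forall>j<dim_col M. \<bar>v $ j\<bar> \<le> 1" and i: "i < dim_row M"
  shows "\<bar>(M *\<^sub>v v) $ i\<bar> \<le> (\<Sum>i<dim_row M. \<Sum>j<dim_col M. \<bar>M $$ (i,j)\<bar>)"
proof -
  have "\<bar>(M *\<^sub>v v) $ i\<bar> \<le> (\<Sum>j<dim_col M. \<bar>M $$ (i,j) * v $ j\<bar>)"
    unfolding index_mult_mat_vec_sum[OF _ v(1) i, OF carrier_matI[OF refl refl]] by (rule sum_abs)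
  also have "\<dots> \<le> (\<Sum>j<dim_col M. \<bar>M $$ (i,j)\<bar>)"
    using v(2) by (intro sum_mono) (auto simp: abs_mult intro: mult_left_le)
  also have "\<dots> \<le> (\<Sum>i<dim_row M. \<Sum>j<dim_col M. \<bar>M $$ (i,j)\<bar>)" using i
    by (intro member_le_sum[where f = "\<lambda>i. \<Sum>j<dim_col M. \<bar>M $$ (i,j)\<bar>"]) (auto intro: sum_nonneg)
  finally show ?thesis .
qed

lemma bdd_above_spec_norm_set:
  fixes M :: "real mat"
  shows "bdd_above {vnorm2 (M *\<^sub>v v) | v. v \<in> carrier_vec (dim_col M) \<and> vnorm2 v \<le> 1}"
proof (rule bdd_aboveI)
  let ?R = "\<Sum>i<dim_row M. \<Sum>j<dim_col M. \<bar>M $$ (i,j)\<bar>"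
  have Mc: "M \<in> carrier_mat (dim_row M) (dim_col M)" by auto
  fix y assume "y \<in> {vnorm2 (M *\<^sub>v v) | v. v \<in> carrier_vec (dim_col M) \<and> vnorm2 v \<le> 1}"
  then obtain v where v: "v \<in> carrier_vec (dim_col M)" "vnorm2 v \<le> 1" "y = vnorm2 (M *\<^sub>v v)"
    by auto
  have "v \<bullet> v \<le> 1" using v(2) scalar_prod_self_nonneg[of v] unfolding vnorm2_def by simp
  have vj: "\<forall>j<dim_col M. \<bar>v $ j\<bar> \<le> 1"
  proof (intro allI impI)
    fix j assume "j < dim_col M"
    hence "v $ j * v $ j \<le> (\<Sum>l<dim_col M. v $ l * v $ l)" by (intro member_le_sum) auto
    also have "\<dots> \<le> 1" using \<open>v \<bullet> v \<le> 1\<close> scalar_prod_sum[OF v(1) v(1)] by simp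
    finally show "\<bar>v $ j\<bar> \<le> 1" using abs_square_le_1 by (metis power2_eq_square)
  qed
  have "(M *\<^sub>v v) \<bullet> (M *\<^sub>v v) = (\<Sum>i<dim_row M. (M *\<^sub>v v) $ i * (M *\<^sub>v v) $ i)"
    using mult_mat_vec_carrier[OF Mc v(1)] mult_mat_vec_carrier[OF Mc v(1)] by (rule scalar_prod_sum)
  also have "\<dots> \<le> (\<Sum>i<dim_row M. ?R * ?R)"
  proof (intro sum_mono)
    fix i assume "i \<in> {..<dim_row M}"
    hence "\<bar>(M *\<^sub>v v) $ i\<bar> * \<bar>(M *\<^sub>v v) $ i\<bar> \<le> ?R * ?R" using abs_mult_mat_vec_le[OF v(1) vj]
      by (intro mult_mono) (auto intro: order_trans[OF abs_ge_zero])
    thus "(M *\<^sub>v v) $ i * (M *\<^sub>v v) $ i \<le> ?R * ?R" by (simp add: abs_mult[symmetric])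
  qed
  finally show "y \<le> sqrt (real (dim_row M) * (?R * ?R))" unfolding v(3) vnorm2_def by simp
qed

lemma vnorm2_mult_le_spec_norm:
  fixes M :: "real mat"
  assumes "v \<in> carrier_vec (dim_col M)" "vnorm2 v \<le> 1"
  shows "vnorm2 (M *\<^sub>v v) \<le> spec_norm M"
  unfolding spec_norm_def using assms by (intro cSup_upper[OF _ bdd_above_spec_norm_set]) blast

lemma spec_norm_le_1_contraction:
  fixes W :: "real mat"
  assumes W: "W \<in> carrier_mat n n" and sn: "spec_norm W \<le> 1"
  shows "contraction_mat n W"
  unfolding contraction_mat_def
proof (intro conjI W ballI)
  fix x :: "real vec" assume x: "x \<in> carrier_vec n"
  show "(W *\<^sub>v x) \<bullet> (W *\<^sub>v x) \<le> x \<bullet> x"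
  proof (cases "x = 0\<^sub>v n")
    case True
    have "W *\<^sub>v 0\<^sub>v n = 0\<^sub>v n" using W by (intro eq_vecI) auto
    thus ?thesis using True by simp
  next
    case False
    hence xx: "0 < x \<bullet> x" using scalar_prod_self_nonneg[of x] scalar_prod_self_eq_0_iff[OF x] by linarith
    define s where "s = sqrt (x \<bullet> x)"
    have s0: "0 < s" and ss: "s * s = x \<bullet> x" unfolding s_def using xx by auto
    define v where "v = (1 / s) \<cdot>\<^sub>v x"
    have "v \<bullet> v = (1/s) * (1/s) * (x \<bullet> x)" unfolding v_def using x
      by (simp add: scalar_prod_smult_right)
    hence "vnorm2 v = 1" unfolding vnorm2_def using s0 ss xx by simp
    hence "vnorm2 (W *\<^sub>v v) \<le> 1"
      using vnorm2_mult_le_spec_norm[of v W] sn W x unfolding v_def by simp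
    hence "(W *\<^sub>v v) \<bullet> (W *\<^sub>v v) \<le> 1" unfolding vnorm2_def by simp
    moreover have "(W *\<^sub>v v) \<bullet> (W *\<^sub>v v) = (1/s) * (1/s) * ((W *\<^sub>v x) \<bullet> (W *\<^sub>v x))"
      unfolding v_def using W x by (simp add: mult_mat_vec scalar_prod_smult_right)
    ultimately have "(W *\<^sub>v x) \<bullet> (W *\<^sub>v x) \<le> s * s" using s0 by (simp add: field_simps)
    thus ?thesis using ss by simp
  qed
qed

lemmas scalar_prod_distribs = add_scalar_prod_distrib[of _ N] scalar_prod_add_distrib[of _ N]
  minus_scalar_prod_distrib[of _ N] scalar_prod_minus_distrib[of _ N] for N

lemma orth_proj_scalar_prod:
  fixes P :: "real mat"
  assumes P: "P \<in> carrier_mat n n" and PT: "P\<^sup>T = P" and PP: "P * P = P"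
    and u: "u \<in> carrier_vec n" and v: "v \<in> carrier_vec n"
  shows "(P *\<^sub>v u) \<bullet> (P *\<^sub>v v) = u \<bullet> (P *\<^sub>v v)"
proof -
  have "(P *\<^sub>v u) \<bullet> (P *\<^sub>v v) = (P\<^sup>T *\<^sub>v u) \<bullet> (P *\<^sub>v v)" using PT by simp
  also have "\<dots> = u \<bullet> (P *\<^sub>v (P *\<^sub>v v))" using P u v by (intro transpose_vec_mult_scalar) auto
  also have "P *\<^sub>v (P *\<^sub>v v) = (P * P) *\<^sub>v v" using P v by (intro assoc_mult_mat_vec[symmetric]) auto
  finally show ?thesis unfolding PP .
qed

lemma orth_proj_orthogonal:
  fixes P :: "real mat"
  assumes P: "P \<in> carrier_mat n n" and PT: "P\<^sup>T = P" and PP: "P * P = P"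
    and u: "u \<in> carrier_vec n" and v: "v \<in> carrier_vec n"
  shows "(P *\<^sub>v u) \<bullet> (v - P *\<^sub>v v) = 0"
proof -
  have "(P *\<^sub>v u) \<bullet> (P *\<^sub>v v) = (P *\<^sub>v u) \<bullet> v"
    unfolding orth_proj_scalar_prod[OF P PT PP u v] using transpose_vec_mult_scalar[OF P v u] PT by simp
  thus ?thesis using P u v by (simp add: scalar_prod_distribs[where N=n])
qed

lemma orth_proj_pythagoras:
  fixes P :: "real mat"
  assumes P: "P \<in> carrier_mat n n" and PT: "P\<^sup>T = P" and PP: "P * P = P" and u: "u \<in> carrier_vec n"
  shows "(u - P *\<^sub>v u) \<bullet> (u - P *\<^sub>v u) = u \<bullet> u - (P *\<^sub>v u) \<bullet> (P *\<^sub>v u)"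
proof -
  have "(P *\<^sub>v u) \<bullet> (P *\<^sub>v u) = u \<bullet> (P *\<^sub>v u)" by (rule orth_proj_scalar_prod[OF P PT PP u u])
  moreover have "(P *\<^sub>v u) \<bullet> u = u \<bullet> (P *\<^sub>v u)" using P u by (intro comm_scalar_prod) auto
  ultimately show ?thesis using P u by (simp add: scalar_prod_distribs[where N=n])
qed

lemma compression_mult_vec:
  fixes P W :: "real mat"
  assumes P: "P \<in> carrier_mat n n" and W: "W \<in> carrier_mat n n" and x: "x \<in> carrier_vec n"
  shows "(P + W - (P * W + W * P - P * W * P)) *\<^sub>v x
       = P *\<^sub>v x + (W *\<^sub>v (x - P *\<^sub>v x) - P *\<^sub>v (W *\<^sub>v (x - P *\<^sub>v x)))"
proof -
  have cs: "P * W \<in> carrier_mat n n" "W * P \<in> carrier_mat n n" "P * W * P \<in> carrier_mat n n"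
    "P * W + W * P \<in> carrier_mat n n" "P * W + W * P - P * W * P \<in> carrier_mat n n"
    "P + W \<in> carrier_mat n n" using P W by auto
  have "(P + W - (P * W + W * P - P * W * P)) *\<^sub>v x
      = (P *\<^sub>v x + W *\<^sub>v x) - ((P *\<^sub>v (W *\<^sub>v x) + W *\<^sub>v (P *\<^sub>v x)) - P *\<^sub>v (W *\<^sub>v (P *\<^sub>v x)))"
    using P W x cs
    by (simp add: minus_mult_distrib_mat_vec[of _ n n] add_mult_distrib_mat_vec[of _ n n]
      assoc_mult_mat_vec[of _ n n] assoc_mult_mat_vec[OF P cs(2) x])
  also have "\<dots> = P *\<^sub>v x + (W *\<^sub>v (x - P *\<^sub>v x) - P *\<^sub>v (W *\<^sub>v (x - P *\<^sub>v x)))"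
    using P W x by (intro eq_vecI) (auto simp: mult_minus_distrib_mat_vec[of _ n n])
  finally show ?thesis .
qed

text \<open>\<open>P + W - P\<^sub>T(W) = P + (I - P) W (I - P)\<close> maps \<open>x\<close> to the orthogonal sum of \<open>P x\<close> and the
  component of \<open>W (x - P x)\<close> orthogonal to the range of \<open>P\<close>.\<close>

lemma contraction_proj_compression:
  fixes P W :: "real mat"
  assumes P: "P \<in> carrier_mat n n" and PT: "P\<^sup>T = P" and PP: "P * P = P"
    and W: "contraction_mat n W"
  shows "contraction_mat n (P + W - (P * W + W * P - P * W * P))"
  unfolding contraction_mat_def
proof (intro conjI ballI)
  have Wc: "W \<in> carrier_mat n n" and Wcontr: "\<forall>x\<in>carrier_vec n. (W *\<^sub>v x) \<bullet> (W *\<^sub>v x) \<le> x \<bullet> x"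
    using W unfolding contraction_mat_def by auto
  have "P * W * P \<in> carrier_mat n n" using P Wc by auto
  thus "P + W - (P * W + W * P - P * W * P) \<in> carrier_mat n n"
    by (rule minus_carrier_mat[OF minus_carrier_mat])
  fix x :: "real vec" assume x: "x \<in> carrier_vec n"
  define a where "a = P *\<^sub>v x"
  define y where "y = x - a"
  define wy where "wy = W *\<^sub>v y"
  define z where "z = wy - P *\<^sub>v wy"
  have c: "a \<in> carrier_vec n" "y \<in> carrier_vec n" "wy \<in> carrier_vec n" "z \<in> carrier_vec n"
    unfolding a_def y_def wy_def z_def using P Wc x by auto
  have "(a + z) \<bullet> (a + z) = a \<bullet> a + 2 * (a \<bullet> z) + z \<bullet> z"
  proof -
    have "z \<bullet> a = a \<bullet> z" using c by (intro comm_scalar_prod) auto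
    thus ?thesis using c by (simp add: scalar_prod_distribs[where N=n])
  qed
  also have "\<dots> \<le> a \<bullet> a + wy \<bullet> wy"
    using orth_proj_orthogonal[OF P PT PP x c(3)] orth_proj_pythagoras[OF P PT PP c(3)]
      scalar_prod_self_nonneg[of "P *\<^sub>v wy"] unfolding a_def z_def by simp
  also have "\<dots> \<le> a \<bullet> a + y \<bullet> y" using Wcontr c unfolding wy_def by auto
  also have "\<dots> = x \<bullet> x" using orth_proj_pythagoras[OF P PT PP x] unfolding y_def a_def by simp
  finally show "((P + W - (P * W + W * P - P * W * P)) *\<^sub>v x) \<bullet> ((P + W - (P * W + W * P - P * W * P)) *\<^sub>v x) \<le> x \<bullet> x"
    unfolding compression_mult_vec[OF P Wc x] a_def z_def wy_def y_def .
qed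

section \<open>Compact decompositions of cluster matrices\<close>

lemma compact_decomp_diag:
  assumes "compact_decomp Y r U0 S0"
  shows "S0 = mat_diag r (\<lambda>k. S0 $$ (k,k))"
  using assms unfolding compact_decomp_def diagonal_mat_def mat_diag_def by (intro eq_matI) auto

lemma compact_decomp_conj_diag:
  assumes "compact_decomp Y r U0 S0"
  shows "Y = U0 * mat_diag r (\<lambda>k. S0 $$ (k,k)) * U0\<^sup>T"
  using assms compact_decomp_diag[OF assms] unfolding compact_decomp_def by metis

lemma compact_decomp_psd:
  assumes "compact_decomp Y r U0 S0"
  shows "psd_mat Y"
proof -
  have "U0 \<in> carrier_mat (dim_row Y) r" and "\<forall>k<r. 0 \<le> S0 $$ (k,k)"
    using assms unfolding compact_decomp_def by (auto simp: less_imp_le)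
  from psd_mat_conj_diag[OF this] show ?thesis unfolding compact_decomp_conj_diag[OF assms, symmetric] .
qed

lemma compact_decomp_proj:
  fixes Y U0 S0 :: "real mat"
  assumes dec: "compact_decomp Y r U0 S0" and Y: "Y \<in> carrier_mat n n"
  defines "P \<equiv> U0 * U0\<^sup>T"
  shows "P \<in> carrier_mat n n" "P\<^sup>T = P" "P * P = P" "P * Y = Y" "Y * P = Y"
proof -
  have U0: "U0 \<in> carrier_mat n r" and S0: "S0 \<in> carrier_mat r r" and UU: "U0\<^sup>T * U0 = 1\<^sub>m r"
    and Yd: "Y = U0 * S0 * U0\<^sup>T"
    using dec Y unfolding compact_decomp_def by auto
  have UT: "U0\<^sup>T \<in> carrier_mat r n" using U0 by simp
  have UUX: "U0\<^sup>T * (U0 * X) = X" if "X \<in> carrier_mat r k" for X k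
    using assoc_mult_mat[OF UT U0 that] UU that by simp
  show Pc: "P \<in> carrier_mat n n" unfolding P_def using U0 UT by (rule mult_carrier_mat)
  show "P\<^sup>T = P" unfolding P_def using U0 by (simp add: transpose_mult[OF U0 UT])
  show "P * P = P" unfolding P_def using assoc_mult_mat[OF U0 UT mult_carrier_mat[OF U0 UT]] UUX[OF UT] by simp
  have "U0\<^sup>T * Y = S0 * U0\<^sup>T"
    unfolding Yd using assoc_mult_mat[OF UT mult_carrier_mat[OF U0 S0] UT] UUX[OF S0] by simp
  thus PY: "P * Y = Y" unfolding P_def using assoc_mult_mat[OF U0 UT Y] assoc_mult_mat[OF U0 S0 UT] Yd by simp
  have YT: "Y\<^sup>T = Y" using compact_decomp_psd[OF dec] unfolding psd_mat_def by simp
  have "(P * Y)\<^sup>T = Y\<^sup>T * P\<^sup>T" using Pc Y by (rule transpose_mult)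
  thus "Y * P = Y" unfolding PY YT \<open>P\<^sup>T = P\<close> by simp
qed

lemma compact_decomp_proj_factor:
  fixes Y U0 S0 :: "real mat"
  assumes dec: "compact_decomp Y r U0 S0" and Yc: "Y \<in> carrier_mat n n"
  shows "\<exists>X \<in> carrier_mat n n. X * Y = U0 * U0\<^sup>T"
proof -
  have U0: "U0 \<in> carrier_mat n r" and S0: "S0 \<in> carrier_mat r r" and UU: "U0\<^sup>T * U0 = 1\<^sub>m r"
    and pos: "\<forall>k<r. 0 < S0 $$ (k,k)" and Yd: "Y = U0 * S0 * U0\<^sup>T"
    using dec Yc unfolding compact_decomp_def by auto
  have UT: "U0\<^sup>T \<in> carrier_mat r n" using U0 by simp
  define G where "G = mat_diag r (\<lambda>k. 1 / S0 $$ (k,k))"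
  have GS: "G * S0 = 1\<^sub>m r" unfolding G_def
    by (subst compact_decomp_diag[OF dec], unfold mat_diag_diag) (use pos in \<open>auto simp: mat_diag_def intro!: eq_matI\<close>)
  have UGc: "U0 * G \<in> carrier_mat n r" unfolding G_def using U0 mat_diag_dim by (rule mult_carrier_mat)
  have "U0\<^sup>T * Y = S0 * U0\<^sup>T"
    unfolding Yd using assoc_mult_mat[OF UT mult_carrier_mat[OF U0 S0] UT] assoc_mult_mat[OF UT U0 S0] UU S0
    by simp
  moreover have "(U0 * G * U0\<^sup>T) * Y = (U0 * G) * (U0\<^sup>T * Y)" using UGc UT Yc by (rule assoc_mult_mat)
  moreover have "(U0 * G) * (S0 * U0\<^sup>T) = U0 * ((G * S0) * U0\<^sup>T)"
    unfolding G_def using U0 UT S0 by (simp add: assoc_mult_mat[of _ n r _ r _ n] assoc_mult_mat[OF mat_diag_dim S0 UT])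
  ultimately have "(U0 * G * U0\<^sup>T) * Y = U0 * U0\<^sup>T" unfolding GS using UT by simp
  moreover have "U0 * G * U0\<^sup>T \<in> carrier_mat n n" using UGc UT by (rule mult_carrier_mat)
  ultimately show ?thesis by blast
qed

lemma cluster_matrix_col:
  assumes Y: "is_cluster_matrix n V1 Cl Y" and C: "C \<in> Cl" "l \<in> C" and k: "k < n"
  shows "Y $$ (k,l) = (if k \<in> C then 1 else 0)"
proof -
  have part: "partition_on V1 Cl" and V1: "V1 \<subseteq> {0..<n}"
    and Yent: "\<And>i j. i < n \<Longrightarrow> j < n \<Longrightarrow> Y $$ (i,j) = (if \<exists>C\<in>Cl. i \<in> C \<and> j \<in> C then 1 else 0)"
    using Y unfolding is_cluster_matrix_def by auto
  have uniq: "C' = C" if "C' \<in> Cl" "l \<in> C'" for C'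
    using disjointD[OF partition_onD2[OF part] that(1) C(1)] that C(2) by auto
  have "l < n" using partition_onD1[OF part] C V1 by auto
  have "(\<exists>C'\<in>Cl. k \<in> C' \<and> l \<in> C') \<longleftrightarrow> k \<in> C" using uniq C by blast
  thus ?thesis unfolding Yent[OF k \<open>l < n\<close>] by simp
qed

lemma cluster_matrix_proj_vanishes:
  fixes Y U0 S0 :: "real mat"
  assumes Y: "is_cluster_matrix n V1 Cl Y" and dec: "compact_decomp Y r U0 S0"
    and ij: "i < n" "j < n" and Y0: "Y $$ (i,j) = 0"
  shows "(U0 * U0\<^sup>T) $$ (i,j) = 0"
proof -
  define P where "P = U0 * U0\<^sup>T"
  have Yc: "Y \<in> carrier_mat n n" using Y unfolding is_cluster_matrix_def by auto
  note proj = compact_decomp_proj[OF dec Yc, folded P_def]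
  obtain X where X: "X \<in> carrier_mat n n" "X * Y = P"
    using compact_decomp_proj_factor[OF dec Yc] unfolding P_def by blast
  have Pent: "P $$ (i,l) = (\<Sum>k<n. X $$ (i,k) * Y $$ (k,l))" if "l < n" for l
    unfolding X(2)[symmetric] using ij that X Yc by (intro index_mult_mat_sum) auto
  show ?thesis
  proof (cases "\<exists>C\<in>Cl. j \<in> C")
    case False
    hence "Y $$ (k,j) = 0" if "k < n" for k using Y that ij(2) unfolding is_cluster_matrix_def by auto
    thus ?thesis unfolding P_def[symmetric] Pent[OF ij(2)] by simp
  next
    case True
    \<comment> \<open>column \<open>j\<close> of \<open>Y\<close> is the indicator of the cluster \<open>C \<ni> j\<close>, so \<open>Y = P Y\<close> gives \<open>y\<^sub>i\<^sub>j = |C| p\<^sub>i\<^sub>j\<close>\<close>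
    then obtain C where C: "C \<in> Cl" "j \<in> C" by auto
    have CV: "C \<subseteq> {..<n}" using Y C unfolding is_cluster_matrix_def partition_on_def by auto
    have Pl: "P $$ (i,l) = P $$ (i,j)" if "l \<in> C" for l
    proof -
      have "l < n" using CV that by auto
      thus ?thesis unfolding Pent[OF \<open>l < n\<close>] Pent[OF ij(2)]
        using cluster_matrix_col[OF Y C(1)] that C(2) by (intro sum.cong) auto
    qed
    have "Y $$ (i,j) = (P * Y) $$ (i,j)" unfolding proj(4) ..
    also have "\<dots> = (\<Sum>k<n. P $$ (i,k) * Y $$ (k,j))" using proj(1) Yc ij by (rule index_mult_mat_sum)
    also have "\<dots> = (\<Sum>k<n. if k \<in> C then P $$ (i,k) else 0)"
      using cluster_matrix_col[OF Y C] by (intro sum.cong) auto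
    also have "\<dots> = (\<Sum>k\<in>C. P $$ (i,k))" using CV by (simp add: sum.inter_restrict[symmetric] Int_absorb1)
    also have "\<dots> = real (card C) * P $$ (i,j)" using Pl by simp
    finally have "real (card C) * P $$ (i,j) = 0" using Y0 by simp
    moreover have "card C > 0" using CV C(2) by (metis card_gt_0_iff empty_iff finite_lessThan finite_subset)
    ultimately show ?thesis unfolding P_def by simp
  qed
qed

section \<open>The dual certificate\<close>

lemma P_T_eq: "P_T U0 M = U0 * U0\<^sup>T * M + M * (U0 * U0\<^sup>T) - U0 * U0\<^sup>T * M * (U0 * U0\<^sup>T)"
  unfolding P_T_def Let_def ..

lemma P_T_carrier:
  fixes U0 M :: "real mat"
  assumes "U0 \<in> carrier_mat n r" "M \<in> carrier_mat n n"
  shows "P_T U0 M \<in> carrier_mat n n"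
proof -
  have P: "U0 * U0\<^sup>T \<in> carrier_mat n n" using assms(1) by (simp add: mult_carrier_mat[of _ n r])
  have "U0 * U0\<^sup>T * M * (U0 * U0\<^sup>T) \<in> carrier_mat n n"
    using mult_carrier_mat[OF P assms(2)] P by (rule mult_carrier_mat)
  thus ?thesis unfolding P_T_eq by (rule minus_carrier_mat)
qed

lemma dual_certificate_contraction:
  fixes Y U0 S0 W :: "real mat"
  assumes dec: "compact_decomp Y r U0 S0" and Y: "Y \<in> carrier_mat n n"
    and W: "W \<in> carrier_mat n n" and sn: "spec_norm W \<le> 1"
  shows "contraction_mat n (U0 * U0\<^sup>T + W - P_T U0 W)"
  unfolding P_T_eq using compact_decomp_proj(1-3)[OF dec Y] spec_norm_le_1_contraction[OF W sn]
  by (rule contraction_proj_compression)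

lemma dual_certificate_pairing:
  fixes Y U0 S0 W :: "real mat"
  assumes dec: "compact_decomp Y r U0 S0" and Y: "Y \<in> carrier_mat n n" and W: "W \<in> carrier_mat n n"
  shows "frob_inner n (U0 * U0\<^sup>T + W - P_T U0 W) Y = nuclear_norm Y"
proof -
  note P = compact_decomp_proj[OF dec Y]
  have "U0 \<in> carrier_mat n r" using dec Y unfolding compact_decomp_def by auto
  hence PT_W: "P_T U0 W \<in> carrier_mat n n" using W by (rule P_T_carrier)
  have "frob_inner n (U0 * U0\<^sup>T + W - P_T U0 W) Y = frob_inner n (U0 * U0\<^sup>T) Y"
    using frob_inner_compression_eq[OF P(1,2) W Y P(4,5)] P(1) W PT_W
    by (simp add: frob_inner_diff[of _ n] frob_inner_add[of _ n] P_T_eq)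
  also have "\<dots> = mtrace Y"
    using compact_decomp_psd[OF dec] P(1,4) Y unfolding psd_mat_def by (intro frob_inner_eq_mtrace) auto
  also have "\<dots> = nuclear_norm Y" using nuclear_norm_psd[OF compact_decomp_psd[OF dec]] by simp
  finally show ?thesis .
qed

lemma abs_le_max_abs_entry:
  assumes "i < dim_row M" "j < dim_col M"
  shows "\<bar>M $$ (i,j)\<bar> \<le> max_abs_entry M"
proof -
  have "{\<bar>M $$ (i,j)\<bar> | i j. i < dim_row M \<and> j < dim_col M} \<subseteq> (\<lambda>p. \<bar>M $$ p\<bar>) ` ({..<dim_row M} \<times> {..<dim_col M})"
    by blast
  hence "finite {\<bar>M $$ (i,j)\<bar> | i j. i < dim_row M \<and> j < dim_col M}" by (rule finite_subset) simp
  thus ?thesis unfolding max_abs_entry_def using assms by (intro Max_ge) auto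
qed

lemma sum_filtered_index_pairs:
  fixes f :: "nat \<Rightarrow> nat \<Rightarrow> real"
  shows "(\<Sum>(i,j)\<in>{(i,j). i<n \<and> j<n \<and> Q i j}. f i j) = (\<Sum>i<n. \<Sum>j<n. if Q i j then f i j else 0)"
proof -
  have "{(i,j). i<n \<and> j<n \<and> Q i j} = {p \<in> {..<n} \<times> {..<n}. Q (fst p) (snd p)}" by auto
  hence "(\<Sum>(i,j)\<in>{(i,j). i<n \<and> j<n \<and> Q i j}. f i j)
      = (\<Sum>p\<in>{..<n} \<times> {..<n}. if Q (fst p) (snd p) then (\<lambda>(i,j). f i j) p else 0)"
    by (simp add: sum.inter_filter)
  also have "\<dots> = (\<Sum>(i,j)\<in>{..<n} \<times> {..<n}. if Q i j then f i j else 0)"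
    by (rule sum.cong) auto
  finally show ?thesis by (simp add: sum.cartesian_product)
qed

lemma objective_eq_weighted_sum:
  assumes A01: "\<forall>i<n. \<forall>j<n. A $$ (i,j) = 0 \<or> A $$ (i,j) = 1"
  shows "objective n A cA cAc Y
       = (\<Sum>i<n. \<Sum>j<n. (if A $$ (i,j) = 1 then cA else - cAc) * Y $$ (i,j)) - 48 * sqrt (real n) * nuclear_norm Y"
proof -
  have "cA * (\<Sum>i<n. \<Sum>j<n. if A $$ (i,j) = 1 then Y $$ (i,j) else 0)
      - cAc * (\<Sum>i<n. \<Sum>j<n. if A $$ (i,j) = 0 then Y $$ (i,j) else 0)
      = (\<Sum>i<n. \<Sum>j<n. (if A $$ (i,j) = 1 then cA else - cAc) * Y $$ (i,j))"
    unfolding sum_distrib_left sum_subtractf[symmetric] using A01 by (intro sum.cong refl) auto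
  thus ?thesis unfolding objective_def sum_filtered_index_pairs by simp
qed

text \<open>The hypotheses on \<open>Z\<close> say that it is a subgradient of the nuclear norm at \<open>Ys\<close>.\<close>

lemma dual_certificate_strict_optimality:
  fixes C :: "nat \<Rightarrow> nat \<Rightarrow> real" and Y Ys Z :: "real mat"
  assumes Y: "Y \<in> carrier_mat n n" and Ys: "Ys \<in> carrier_mat n n" and neq: "Y \<noteq> Ys"
    and lam: "0 < lam" and e: "0 < e"
    and dual_Y: "frob_inner n Z Y \<le> nuclear_norm Y"
    and dual_Ys: "frob_inner n Z Ys = nuclear_norm Ys"
    and entries: "\<forall>i<n. \<forall>j<n. (lam * C i j - Z $$ (i,j)) * (Y $$ (i,j) - Ys $$ (i,j))
                                \<le> - e * \<bar>Y $$ (i,j) - Ys $$ (i,j)\<bar>"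
  shows "(\<Sum>i<n. \<Sum>j<n. C i j * Y $$ (i,j)) - nuclear_norm Y / lam
       < (\<Sum>i<n. \<Sum>j<n. C i j * Ys $$ (i,j)) - nuclear_norm Ys / lam"
    (is "?L Y - _ < ?L Ys - _")
proof -
  define D where "D i j = Y $$ (i,j) - Ys $$ (i,j)" for i j
  obtain i0 j0 where ij0: "i0 < n" "j0 < n" "D i0 j0 \<noteq> 0"
    using neq Y Ys unfolding D_def by (metis carrier_matD eq_matI eq_iff_diff_eq_0)
  have "0 < \<bar>D i0 j0\<bar>" using ij0 by simp
  also have "\<dots> \<le> (\<Sum>j<n. \<bar>D i0 j\<bar>)" using ij0 by (intro member_le_sum) auto
  also have "\<dots> \<le> (\<Sum>i<n. \<Sum>j<n. \<bar>D i j\<bar>)"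
    using ij0 by (intro member_le_sum[where f = "\<lambda>i. \<Sum>j<n. \<bar>D i j\<bar>"]) (auto intro: sum_nonneg)
  finally have "- e * (\<Sum>i<n. \<Sum>j<n. \<bar>D i j\<bar>) < 0" using e by simp
  moreover have "(\<Sum>i<n. \<Sum>j<n. (lam * C i j - Z $$ (i,j)) * D i j) \<le> - e * (\<Sum>i<n. \<Sum>j<n. \<bar>D i j\<bar>)"
    unfolding sum_distrib_left using entries unfolding D_def by (intro sum_mono) auto
  moreover have "(\<Sum>i<n. \<Sum>j<n. (lam * C i j - Z $$ (i,j)) * D i j)
      = lam * (?L Y - ?L Ys) - (frob_inner n Z Y - frob_inner n Z Ys)"
    unfolding frob_inner_def D_def by (simp add: sum_subtractf[symmetric] sum_distrib_left algebra_simps)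
  ultimately have "lam * (?L Y - ?L Ys) < frob_inner n Z Y - frob_inner n Z Ys" by linarith
  also have "\<dots> \<le> nuclear_norm Y - nuclear_norm Ys" using dual_Y dual_Ys by simp
  finally have "?L Y - ?L Ys < (nuclear_norm Y - nuclear_norm Ys) / lam"
    using lam by (simp add: pos_less_divide_eq mult.commute)
  thus ?thesis by (simp add: diff_divide_distrib)
qed

lemma certificate_entry_bound:
  fixes lam cA cAc \<epsilon> a p w t y ys :: real
  assumes pos: "0 < \<epsilon>" "0 < lam" "0 < cA" "0 < cAc"
    and ys: "ys = 0 \<or> ys = 1" and y: "0 \<le> y" "y \<le> 1"
    and p: "ys = 0 \<Longrightarrow> p = 0"
    and t: "\<bar>t\<bar> \<le> \<epsilon> / 2 * lam * min cAc cA"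
    and c1: "ys \<noteq> 0 \<and> a \<noteq> 1 \<Longrightarrow> - (1 + \<epsilon>) * lam * cAc - (p + w) = 0"
    and c2: "ys = 0 \<and> a = 1 \<Longrightarrow> - (1 + \<epsilon>) * lam * cA + w = 0"
    and c3: "ys \<noteq> 0 \<and> a = 1 \<Longrightarrow> (1 - \<epsilon>) * lam * cA - (p + w) \<ge> 0"
    and c4: "ys = 0 \<and> a \<noteq> 1 \<Longrightarrow> (1 - \<epsilon>) * lam * cAc + w \<ge> 0"
  shows "(lam * (if a = 1 then cA else - cAc) - (p + w - t)) * (y - ys)
       \<le> - (\<epsilon> * lam * min cAc cA / 2) * \<bar>y - ys\<bar>"
proof -
  define e where "e = \<epsilon> * lam * min cAc cA"
  have e: "e \<le> \<epsilon> * lam * cA" "e \<le> \<epsilon> * lam * cAc" unfolding e_def using pos by auto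
  define c where "c = lam * (if a = 1 then cA else - cAc)"
  have gap: "(c - (p + w)) * (y - ys) \<le> - e * \<bar>y - ys\<bar>"
  proof (cases "ys = 0")
    case True
    hence "c - (p + w) \<le> - e" using p c2 c4 e unfolding c_def by (cases "a = 1") (auto simp: algebra_simps)
    thus ?thesis using True mult_right_mono[OF \<open>c - (p + w) \<le> - e\<close> y(1)] y by simp
  next
    case False
    hence "e \<le> c - (p + w)" using c1 c3 e unfolding c_def by (cases "a = 1") (auto simp: algebra_simps)
    moreover have "y - ys \<le> 0" using False ys y by simp
    ultimately have "(c - (p + w)) * (y - ys) \<le> e * (y - ys)" by (rule mult_right_mono_neg)
    thus ?thesis using \<open>y - ys \<le> 0\<close> by (simp add: abs_of_nonpos right_diff_distrib)
  qed
  have "t * (y - ys) \<le> \<bar>t\<bar> * \<bar>y - ys\<bar>" by (metis abs_ge_self abs_mult)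
  also have "\<dots> \<le> e / 2 * \<bar>y - ys\<bar>" using t unfolding e_def by (intro mult_right_mono) auto
  finally have "t * (y - ys) \<le> e / 2 * \<bar>y - ys\<bar>" .
  moreover have "(c - (p + w - t)) * (y - ys) = (c - (p + w)) * (y - ys) + t * (y - ys)"
    by (simp add: algebra_simps)
  ultimately show ?thesis using gap unfolding c_def[symmetric] e_def by linarith
qed

lemma dual_certificate_entries:
  fixes Y Ystar U0 S0 W A :: "real mat" and lam cA cAc \<epsilon> :: real
  assumes Ystar: "is_cluster_matrix n V1 Cl Ystar" and decomp: "compact_decomp Ystar r U0 S0"
    and W: "W \<in> carrier_mat n n" and Y: "feasible n Y"
    and pos: "0 < \<epsilon>" "0 < lam" "0 < cA" "0 < cAc"
    and cond_b: "max_abs_entry (P_T U0 W) \<le> \<epsilon> / 2 * lam * min cAc cA"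
    and cond_c1: "\<forall>i<n. \<forall>j<n. Ystar $$ (i,j) \<noteq> 0 \<and> A $$ (i,j) \<noteq> 1 \<longrightarrow>
                   - (1 + \<epsilon>) * lam * cAc - (U0 * U0\<^sup>T + W) $$ (i,j) = 0"
    and cond_c2: "\<forall>i<n. \<forall>j<n. Ystar $$ (i,j) = 0 \<and> A $$ (i,j) = 1 \<longrightarrow>
                   - (1 + \<epsilon>) * lam * cA + W $$ (i,j) = 0"
    and cond_c3: "\<forall>i<n. \<forall>j<n. Ystar $$ (i,j) \<noteq> 0 \<and> A $$ (i,j) = 1 \<longrightarrow>
                   (1 - \<epsilon>) * lam * cA - (U0 * U0\<^sup>T + W) $$ (i,j) \<ge> 0"
    and cond_c4: "\<forall>i<n. \<forall>j<n. Ystar $$ (i,j) = 0 \<and> A $$ (i,j) \<noteq> 1 \<longrightarrow>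
                   (1 - \<epsilon>) * lam * cAc + W $$ (i,j) \<ge> 0"
  shows "\<forall>i<n. \<forall>j<n. (lam * (if A $$ (i,j) = 1 then cA else - cAc) - (U0 * U0\<^sup>T + W - P_T U0 W) $$ (i,j))
                      * (Y $$ (i,j) - Ystar $$ (i,j))
                    \<le> - (\<epsilon> * lam * min cAc cA / 2) * \<bar>Y $$ (i,j) - Ystar $$ (i,j)\<bar>"
proof (intro allI impI)
  fix i j assume ij: "i < n" "j < n"
  have Yc: "Ystar \<in> carrier_mat n n" and Y01: "Ystar $$ (i,j) = 0 \<or> Ystar $$ (i,j) = 1"
    using Ystar ij unfolding is_cluster_matrix_def by auto
  have Y01': "0 \<le> Y $$ (i,j)" "Y $$ (i,j) \<le> 1" using Y ij unfolding feasible_def by auto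
  have U0: "U0 \<in> carrier_mat n r" using decomp Yc unfolding compact_decomp_def by auto
  have PT: "P_T U0 W \<in> carrier_mat n n" by (rule P_T_carrier[OF U0 W])
  have Zij: "(U0 * U0\<^sup>T + W - P_T U0 W) $$ (i,j) = (U0 * U0\<^sup>T) $$ (i,j) + W $$ (i,j) - P_T U0 W $$ (i,j)"
    using ij U0 W PT by simp
  have PTij: "\<bar>P_T U0 W $$ (i,j)\<bar> \<le> \<epsilon> / 2 * lam * min cAc cA"
    using abs_le_max_abs_entry[of i "P_T U0 W" j] ij PT cond_b by simp
  have PWij: "(U0 * U0\<^sup>T + W) $$ (i,j) = (U0 * U0\<^sup>T) $$ (i,j) + W $$ (i,j)" using ij U0 W by simp
  note conds = cond_c1 cond_c2 cond_c3 cond_c4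
  show "(lam * (if A $$ (i,j) = 1 then cA else - cAc) - (U0 * U0\<^sup>T + W - P_T U0 W) $$ (i,j))
          * (Y $$ (i,j) - Ystar $$ (i,j)) \<le> - (\<epsilon> * lam * min cAc cA / 2) * \<bar>Y $$ (i,j) - Ystar $$ (i,j)\<bar>"
    unfolding Zij
    by (rule certificate_entry_bound)
      (use PTij pos Y01 Y01' cluster_matrix_proj_vanishes[OF Ystar decomp ij] conds[rule_format, OF ij, unfolded PWij]
        in auto)
qed

theorem proposition1:
  fixes n r :: nat and A Ystar U0 S0 W :: "real mat" and t \<epsilon> :: real
    and V1 :: "nat set" and Cl :: "nat set set"
  assumes A_carrier: "A \<in> carrier_mat n n"
    and A_01: "\<forall>i<n. \<forall>j<n. A $$ (i,j) = 0 \<or> A $$ (i,j) = 1"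
    and A_sym: "A\<^sup>T = A"
    and t: "0 < t" "t < 1"
    and Ystar: "is_cluster_matrix n V1 Cl Ystar"
    and decomp: "compact_decomp Ystar r U0 S0"
    and W_carrier: "W \<in> carrier_mat n n"
    and eps: "0 < \<epsilon>" "\<epsilon> < 1"
    and cond_a: "spec_norm W \<le> 1"
    and cond_b: "max_abs_entry (P_T U0 W)
                   \<le> \<epsilon> / 2 * (1 / (48 * sqrt (real n))) * min (sqrt (t / (1 - t))) (sqrt ((1 - t) / t))"
    and cond_c1: "\<forall>i<n. \<forall>j<n. Ystar $$ (i,j) \<noteq> 0 \<and> A $$ (i,j) \<noteq> 1 \<longrightarrow>
                   - (1 + \<epsilon>) * (1 / (48 * sqrt (real n))) * sqrt (t / (1 - t))
                   - (U0 * U0\<^sup>T + W) $$ (i,j) = 0"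
    and cond_c2: "\<forall>i<n. \<forall>j<n. Ystar $$ (i,j) = 0 \<and> A $$ (i,j) = 1 \<longrightarrow>
                   - (1 + \<epsilon>) * (1 / (48 * sqrt (real n))) * sqrt ((1 - t) / t) + W $$ (i,j) = 0"
    and cond_c3: "\<forall>i<n. \<forall>j<n. Ystar $$ (i,j) \<noteq> 0 \<and> A $$ (i,j) = 1 \<longrightarrow>
                   (1 - \<epsilon>) * (1 / (48 * sqrt (real n))) * sqrt ((1 - t) / t)
                   - (U0 * U0\<^sup>T + W) $$ (i,j) \<ge> 0"
    and cond_c4: "\<forall>i<n. \<forall>j<n. Ystar $$ (i,j) = 0 \<and> A $$ (i,j) \<noteq> 1 \<longrightarrow>
                   (1 - \<epsilon>) * (1 / (48 * sqrt (real n))) * sqrt (t / (1 - t)) + W $$ (i,j) \<ge> 0"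
  shows "feasible n Ystar \<and>
         (\<forall>Y. feasible n Y \<and> Y \<noteq> Ystar \<longrightarrow>
            objective n A (sqrt ((1 - t) / t)) (sqrt (t / (1 - t))) Y
            < objective n A (sqrt ((1 - t) / t)) (sqrt (t / (1 - t))) Ystar)"
proof -
  define lam where "lam = 1 / (48 * sqrt (real n))"
  define cA where "cA = sqrt ((1 - t) / t)"
  define cAc where "cAc = sqrt (t / (1 - t))"
  have Yc: "Ystar \<in> carrier_mat n n" and Y01: "\<forall>i<n. \<forall>j<n. Ystar $$ (i,j) = 0 \<or> Ystar $$ (i,j) = 1"
    using Ystar unfolding is_cluster_matrix_def by auto
  have "feasible n Ystar" unfolding feasible_def using Yc Y01 by force
  moreover have "objective n A cA cAc Y < objective n A cA cAc Ystar" if Y: "feasible n Y" "Y \<noteq> Ystar" for Y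
  proof -
    have Yc': "Y \<in> carrier_mat n n" using Y(1) unfolding feasible_def by auto
    have "n \<noteq> 0" using Y(2) Yc Yc' by (auto intro!: eq_matI)
    hence pos: "0 < lam" "0 < cA" "0 < cAc" "0 < \<epsilon> * lam * min cAc cA / 2"
      unfolding lam_def cA_def cAc_def using t eps by auto
    note conds = cond_b cond_c1 cond_c2 cond_c3 cond_c4
    have entries: "\<forall>i<n. \<forall>j<n. (lam * (if A $$ (i,j) = 1 then cA else - cAc) - (U0 * U0\<^sup>T + W - P_T U0 W) $$ (i,j))
                      * (Y $$ (i,j) - Ystar $$ (i,j)) \<le> - (\<epsilon> * lam * min cAc cA / 2) * \<bar>Y $$ (i,j) - Ystar $$ (i,j)\<bar>"
      using conds[folded lam_def cA_def cAc_def] by (intro dual_certificate_entries[OF Ystar decomp W_carrier Y(1) eps(1) pos(1-3)])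
    show ?thesis
      using dual_certificate_strict_optimality[OF Yc' Yc Y(2) pos(1,4)
          frob_inner_le_nuclear_norm[OF Yc' dual_certificate_contraction[OF decomp Yc W_carrier cond_a]]
          dual_certificate_pairing[OF decomp Yc W_carrier] entries]
      unfolding objective_eq_weighted_sum[OF A_01] lam_def by (simp add: mult.commute)
  qed
  ultimately show ?thesis unfolding cA_def cAc_def by blast
qed

end
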